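(* Let $A$ be an abelian variety of dimension $g\ge1$ over a finite field $\mathbb F_q$. Suppose that $P_A(T)$ has cycle types $(2g)$ and $(2,1,1,\ldots,1)$, and that $Q_A(T)$ has cycle type $\sigma$ for every partition $\sigma$ of $g$. Then $\operatorname{Gal}(P_A(T))\cong W_{2g}$.
   Context: $P_A(T)\in\mathbb Z[T]$ is the unique polynomial of degree $2g$ such that the isogeny $r-\pi_A$ has degree $P_A(r)$ for all $r\in\mathbb Z$, where $\pi_A$ is the $q$-power Frobenius endomorphism of $A$; it satisfies $P_A(q/T)/(q/T)^g=P_A(T)/T^g$. $Q_A(T)\in\mathbb Z[T]$ is the unique polynomial with $P_A(T)=T^gQ_A(T+q/T)$. $W_{2g}$ is the group of permutations of $\{1,\ldots,2g\}$ that permute the set of pairs $\{\{1,2\},\ldots,\{2g-1,2g\}\}$. For $f\in\mathbb Z[T]$ of degree $n$, $\operatorname{Gal}(f)$ is the Galois group over $\mathbb Q$ of its splitting field; a partition $\sigma=(\sigma_1,\ldots,\sigma_k)$ of $n$ ($\sigma_1\ge\cdots\ge\sigma_k\ge1$, $\sum\sigma_i=n$) is a cycle type of $f$ if $f$ is separable and the image of $\operatorname{Gal}(f)$ in the symmetric group $\mathfrak S_n$ (via a numbering of the roots) contains a permutation whose disjoint cycle lengths are $\sigma_1,\ldots,\sigma_k$. *)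

theory Defs
  imports Complex_Main "HOL-Computational_Algebra.Polynomial" "HOL-Library.Multiset"
    "HOL-Combinatorics.Permutations"
begin

definition croots :: "int poly \<Rightarrow> complex set" where
  "croots f = {z. poly (map_poly of_int f) z = 0}"

definition separable_int :: "int poly \<Rightarrow> bool" where
  "separable_int f \<longleftrightarrow> f \<noteq> 0 \<and> card (croots f) = degree f"

definition subfield :: "complex set \<Rightarrow> bool" where
  "subfield K \<longleftrightarrow> 0 \<in> K \<and> 1 \<in> K \<and>
     (\<forall>x\<in>K. \<forall>y\<in>K. x + y \<in> K \<and> x * y \<in> K) \<and>
     (\<forall>x\<in>K. - x \<in> K \<and> inverse x \<in> K)"

definition splitting_field :: "int poly \<Rightarrow> complex set" where
  "splitting_field f = \<Inter>{K. subfield K \<and> croots f \<subseteq> K}"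

definition gal :: "int poly \<Rightarrow> (complex \<Rightarrow> complex) set" where
  "gal f = {\<sigma>. bij_betw \<sigma> (splitting_field f) (splitting_field f) \<and>
     (\<forall>x\<in>splitting_field f. \<forall>y\<in>splitting_field f.
        \<sigma> (x + y) = \<sigma> x + \<sigma> y \<and> \<sigma> (x * y) = \<sigma> x * \<sigma> y) \<and>
     (\<forall>x. x \<notin> splitting_field f \<longrightarrow> \<sigma> x = x)}"

definition orbit_of :: "('a \<Rightarrow> 'a) \<Rightarrow> 'a \<Rightarrow> 'a set" where
  "orbit_of \<sigma> x = {(\<sigma> ^^ k) x | k. True}"

definition cycle_type_on :: "('a \<Rightarrow> 'a) \<Rightarrow> 'a set \<Rightarrow> nat multiset" where
  "cycle_type_on \<sigma> S = image_mset card (mset_set {orbit_of \<sigma> x | x. x \<in> S})"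

definition is_partition :: "nat \<Rightarrow> nat multiset \<Rightarrow> bool" where
  "is_partition n lam \<longleftrightarrow> (\<forall>i\<in>#lam. 0 < i) \<and> sum_mset lam = n"

(* lam is a cycle type of f: f separable and some element of Gal(f) permutes the roots
   with cycle lengths lam (numbering of roots is irrelevant) *)
definition has_cycle_type :: "int poly \<Rightarrow> nat multiset \<Rightarrow> bool" where
  "has_cycle_type f lam \<longleftrightarrow> separable_int f \<and>
     (\<exists>\<sigma>\<in>gal f. cycle_type_on \<sigma> (croots f) = lam)"

definition pairs2 :: "nat \<Rightarrow> nat set set" where
  "pairs2 g = {{2*k - 1, 2*k} | k. 1 \<le> k \<and> k \<le> g}"

definition W :: "nat \<Rightarrow> (nat \<Rightarrow> nat) set" where
  "W g = {\<pi>. \<pi> permutes {1..2*g} \<and> (\<forall>p\<in>pairs2 g. \<pi> ` p \<in> pairs2 g)}"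

definition group_iso_fun :: "('a \<Rightarrow> 'a) set \<Rightarrow> ('b \<Rightarrow> 'b) set \<Rightarrow> bool" where
  "group_iso_fun G H \<longleftrightarrow> (\<exists>\<phi>. bij_betw \<phi> G H \<and>
     (\<forall>\<sigma>\<in>G. \<forall>\<tau>\<in>G. \<phi> (\<sigma> \<circ> \<tau>) = \<phi> \<sigma> \<circ> \<phi> \<tau>))"

end

theory Submission
  imports Defs
begin

text \<open>Since \<open>P(T) = T\<^sup>g Q(T + q/T)\<close>, the roots of \<open>P\<close> are the points \<open>z, q/z\<close> over the roots
  \<open>z + q/z\<close> of \<open>Q\<close>; as \<open>P\<close> has \<open>2g\<close> distinct roots, no root is self-dual. Every element of
  \<open>Gal(P)\<close> commutes with \<open>z \<mapsto> q/z\<close>, so numbering the roots such that dual roots get the indices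
  \<open>2k - 1, 2k\<close> embeds \<open>Gal(P)\<close> into \<open>W\<^sub>2\<^sub>g\<close>.

  For surjectivity, the cycle types \<open>(2,1,\<dots>,1)\<close>, \<open>(g)\<close> and \<open>(g-1,1)\<close> force \<open>Gal(Q) = S\<^sub>g\<close>.
  The splitting field of \<open>P\<close> is obtained from that of \<open>Q\<close> by adjoining roots of quadratics, so
  every automorphism of the latter extends, and \<open>Gal(P)\<close> induces every permutation of the dual
  pairs. Finally, conjugating the transposition in \<open>Gal(P)\<close> by powers of its \<open>2g\<close>-cycle yields the
  swap of every dual pair; together these generate \<open>W\<^sub>2\<^sub>g\<close>.\<close>

section \<open>Subfields of the complex numbers and their embeddings\<close>

lemma subfieldD:
  assumes "subfield K"
  shows "0 \<in> K" "1 \<in> K" "x \<in> K \<Longrightarrow> y \<in> K \<Longrightarrow> x + y \<in> K" "x \<in> K \<Longrightarrow> y \<in> K \<Longrightarrow> x * y \<in> K"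
    "x \<in> K \<Longrightarrow> - x \<in> K" "x \<in> K \<Longrightarrow> inverse x \<in> K"
  using assms by (auto simp: subfield_def)

lemma subfield_diff: "subfield K \<Longrightarrow> x \<in> K \<Longrightarrow> y \<in> K \<Longrightarrow> x - y \<in> K"
  by (metis diff_conv_add_uminus subfieldD(3,5))

lemma subfield_divide: "subfield K \<Longrightarrow> x \<in> K \<Longrightarrow> y \<in> K \<Longrightarrow> x / y \<in> K"
  by (simp add: divide_inverse subfieldD(4,6))

lemma subfield_power: "subfield K \<Longrightarrow> x \<in> K \<Longrightarrow> x ^ n \<in> K"
  by (induction n) (auto intro: subfieldD)

lemma subfield_of_nat: "subfield K \<Longrightarrow> of_nat n \<in> K"
  by (induction n) (auto intro: subfieldD)

lemma of_int_eq_of_nat_diff: "(of_int n :: complex) = of_nat (nat n) - of_nat (nat (- n))"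
  by (cases "n \<ge> 0") auto

lemma subfield_of_int: "subfield K \<Longrightarrow> of_int n \<in> K"
  by (subst of_int_eq_of_nat_diff) (auto intro: subfield_diff subfield_of_nat)

lemma subfield_sum: "finite A \<Longrightarrow> subfield K \<Longrightarrow> (\<And>i. i \<in> A \<Longrightarrow> f i \<in> K) \<Longrightarrow> sum f A \<in> K"
  by (induction A rule: finite_induct) (auto intro: subfieldD)

lemma subfield_splitting_field: "subfield (splitting_field f)"
  unfolding splitting_field_def subfield_def by blast

lemma croots_subset_splitting_field: "croots f \<subseteq> splitting_field f"
  unfolding splitting_field_def by auto

lemma splitting_field_least: "subfield K \<Longrightarrow> croots f \<subseteq> K \<Longrightarrow> splitting_field f \<subseteq> K"
  unfolding splitting_field_def by auto

lemma finite_croots: "f \<noteq> 0 \<Longrightarrow> finite (croots f)"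
  unfolding croots_def by (rule poly_roots_finite) (simp add: map_poly_eq_0_iff)

locale field_embedding =
  fixes F :: "complex set" and \<phi> :: "complex \<Rightarrow> complex"
  assumes subfield_F: "subfield F" and inj: "inj_on \<phi> F"
    and add: "x \<in> F \<Longrightarrow> y \<in> F \<Longrightarrow> \<phi> (x + y) = \<phi> x + \<phi> y"
    and mult: "x \<in> F \<Longrightarrow> y \<in> F \<Longrightarrow> \<phi> (x * y) = \<phi> x * \<phi> y"
    and one: "\<phi> 1 = 1"
begin

lemma zero: "\<phi> 0 = 0"
  using add[of 0 0] subfieldD(1)[OF subfield_F] by simp

lemma eq_iff: "x \<in> F \<Longrightarrow> y \<in> F \<Longrightarrow> \<phi> x = \<phi> y \<longleftrightarrow> x = y"
  using inj by (auto dest: inj_onD)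

lemma uminus: "x \<in> F \<Longrightarrow> \<phi> (- x) = - \<phi> x"
  using add[of x "- x"] subfieldD(5)[OF subfield_F] zero
  by (simp add: eq_neg_iff_add_eq_0 add.commute)

lemma diff: "x \<in> F \<Longrightarrow> y \<in> F \<Longrightarrow> \<phi> (x - y) = \<phi> x - \<phi> y"
  using add[of x "- y"] uminus[of y] subfieldD(5)[OF subfield_F] by simp

lemma inverse: "x \<in> F \<Longrightarrow> \<phi> (inverse x) = inverse (\<phi> x)"
proof (cases "x = 0")
  case False
  assume x: "x \<in> F"
  have "\<phi> x * \<phi> (inverse x) = 1"
    using mult[OF x subfieldD(6)[OF subfield_F x]] False one by simp
  thus ?thesis by (metis inverse_unique)
qed (simp add: zero)

lemma divide: "x \<in> F \<Longrightarrow> y \<in> F \<Longrightarrow> \<phi> (x / y) = \<phi> x / \<phi> y"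
  by (simp add: divide_inverse mult inverse subfieldD(6)[OF subfield_F])

lemma power: "x \<in> F \<Longrightarrow> \<phi> (x ^ n) = \<phi> x ^ n"
  by (induction n) (auto simp: one mult subfield_power[OF subfield_F])

lemma of_nat: "\<phi> (of_nat n) = of_nat n"
  by (induction n) (auto simp: one zero add subfield_of_nat[OF subfield_F] subfieldD(2)[OF subfield_F])

lemma of_int: "\<phi> (of_int n) = of_int n"
  using diff[OF subfield_of_nat[OF subfield_F] subfield_of_nat[OF subfield_F], of "nat n" "nat (- n)"]
  by (simp only: of_nat flip: of_int_eq_of_nat_diff)

lemma sum: "finite A \<Longrightarrow> (\<And>i. i \<in> A \<Longrightarrow> f i \<in> F) \<Longrightarrow> \<phi> (sum f A) = (\<Sum>i\<in>A. \<phi> (f i))"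
  by (induction A rule: finite_induct) (auto simp: zero add subfield_sum[OF _ subfield_F])

lemma poly_of_int: "z \<in> F \<Longrightarrow> \<phi> (poly (map_poly of_int p) z) = poly (map_poly of_int p) (\<phi> z)"
  by (simp add: poly_altdef coeff_map_poly degree_map_poly sum mult of_int power
      subfieldD(4)[OF subfield_F] subfield_of_int[OF subfield_F] subfield_power[OF subfield_F])

lemma subfield_image: "subfield (\<phi> ` F)"
  unfolding subfield_def
proof (intro conjI ballI)
  note F = subfieldD[OF subfield_F]
  show "0 \<in> \<phi> ` F" "1 \<in> \<phi> ` F" using F(1,2) zero one by (metis image_eqI)+
  fix x y assume "x \<in> \<phi> ` F" "y \<in> \<phi> ` F"
  then obtain a b where "a \<in> F" "x = \<phi> a" "b \<in> F" "y = \<phi> b" by auto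
  thus "x + y \<in> \<phi> ` F" "x * y \<in> \<phi> ` F" "- x \<in> \<phi> ` F" "inverse x \<in> \<phi> ` F"
    using F add mult uminus inverse by (metis image_eqI)+
qed

end

lemma galD:
  assumes "\<sigma> \<in> gal f"
  shows "bij_betw \<sigma> (splitting_field f) (splitting_field f)"
    "x \<in> splitting_field f \<Longrightarrow> y \<in> splitting_field f \<Longrightarrow> \<sigma> (x + y) = \<sigma> x + \<sigma> y"
    "x \<in> splitting_field f \<Longrightarrow> y \<in> splitting_field f \<Longrightarrow> \<sigma> (x * y) = \<sigma> x * \<sigma> y"
    "x \<notin> splitting_field f \<Longrightarrow> \<sigma> x = x"
  using assms by (auto simp: gal_def)

lemma gal_field_embedding:
  assumes \<sigma>: "\<sigma> \<in> gal f"
  shows "field_embedding (splitting_field f) \<sigma>"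
proof -
  let ?L = "splitting_field f"
  note L = subfieldD[OF subfield_splitting_field]
  have inj: "inj_on \<sigma> ?L" using galD(1)[OF \<sigma>] by (rule bij_betw_imp_inj_on)
  have "\<sigma> 0 = 0" using galD(2)[OF \<sigma>, of 0 0] L(1) by simp
  hence "\<sigma> 1 \<noteq> 0" using inj L(1,2) by (metis inj_onD zero_neq_one)
  moreover have "\<sigma> 1 = \<sigma> 1 * \<sigma> 1" using galD(3)[OF \<sigma>, of 1 1] L(2) by simp
  ultimately have "\<sigma> 1 = 1" by (metis mult_cancel_left2)
  thus ?thesis
    using inj galD(2,3)[OF \<sigma>] subfield_splitting_field by (simp add: field_embedding_def)
qed

lemma gal_bij_croots:
  assumes \<sigma>: "\<sigma> \<in> gal f" and f: "f \<noteq> 0"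
  shows "bij_betw \<sigma> (croots f) (croots f)"
proof -
  interpret field_embedding "splitting_field f" \<sigma> by (rule gal_field_embedding[OF \<sigma>])
  have "\<sigma> ` croots f \<subseteq> croots f"
  proof
    fix y assume "y \<in> \<sigma> ` croots f"
    then obtain x where "x \<in> croots f" "y = \<sigma> x" by blast
    thus "y \<in> croots f"
      using poly_of_int[of x f] zero croots_subset_splitting_field by (auto simp: croots_def)
  qed
  moreover have "inj_on \<sigma> (croots f)" using inj croots_subset_splitting_field by (rule inj_on_subset)
  ultimately show ?thesis using endo_inj_surj[OF finite_croots[OF f]] by (simp add: bij_betw_def)
qed

lemma gal_id: "id \<in> gal f"
  by (simp add: gal_def)

lemma gal_comp:
  assumes \<sigma>: "\<sigma> \<in> gal f" and \<tau>: "\<tau> \<in> gal f"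
  shows "\<sigma> \<circ> \<tau> \<in> gal f"
proof -
  let ?L = "splitting_field f"
  have "\<tau> x \<in> ?L" if "x \<in> ?L" for x using galD(1)[OF \<tau>] that bij_betwE by blast
  moreover have "bij_betw (\<sigma> \<circ> \<tau>) ?L ?L" using galD(1)[OF \<tau>] galD(1)[OF \<sigma>] by (rule bij_betw_trans)
  ultimately show ?thesis
    unfolding gal_def using galD[OF \<sigma>] galD[OF \<tau>] subfieldD[OF subfield_splitting_field] by auto
qed

lemma gal_inverse:
  assumes \<sigma>: "\<sigma> \<in> gal f"
  shows "\<exists>\<sigma>'\<in>gal f. \<forall>x. \<sigma>' (\<sigma> x) = x \<and> \<sigma> (\<sigma>' x) = x"
proof -
  let ?L = "splitting_field f"
  have b: "bij_betw \<sigma> ?L ?L" by (rule galD(1)[OF \<sigma>])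
  define \<sigma>' where "\<sigma>' x = (if x \<in> ?L then inv_into ?L \<sigma> x else x)" for x
  have b': "bij_betw \<sigma>' ?L ?L"
    using bij_betw_inv_into[OF b] by (simp add: \<sigma>'_def cong: bij_betw_cong)
  have left: "\<sigma>' (\<sigma> x) = x" for x
    using b galD(4)[OF \<sigma>] by (cases "x \<in> ?L") (auto simp: \<sigma>'_def bij_betw_def bij_betwE)
  have right: "\<sigma> (\<sigma>' x) = x" for x
    using b galD(4)[OF \<sigma>] by (auto simp: \<sigma>'_def bij_betw_def f_inv_into_f)
  have "\<sigma>' \<in> gal f" unfolding gal_def
  proof (intro CollectI conjI b' ballI allI impI)
    fix x y assume "x \<in> ?L" "y \<in> ?L"
    then obtain a c where "a \<in> ?L" "x = \<sigma> a" "c \<in> ?L" "y = \<sigma> c"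
      using b by (metis bij_betw_def imageE)
    thus "\<sigma>' (x + y) = \<sigma>' x + \<sigma>' y" "\<sigma>' (x * y) = \<sigma>' x * \<sigma>' y"
      using galD(2,3)[OF \<sigma>] left by metis+
  qed (simp add: \<sigma>'_def)
  thus ?thesis using left right by blast
qed

text \<open>The elements on which two automorphisms agree form a subfield.\<close>

lemma gal_eqI:
  assumes \<sigma>: "\<sigma> \<in> gal f" and \<tau>: "\<tau> \<in> gal f" and eq: "\<forall>x\<in>croots f. \<sigma> x = \<tau> x"
  shows "\<sigma> = \<tau>"
proof
  fix x
  let ?L = "splitting_field f"
  interpret s: field_embedding ?L \<sigma> by (rule gal_field_embedding[OF \<sigma>])
  interpret t: field_embedding ?L \<tau> by (rule gal_field_embedding[OF \<tau>])
  have "subfield {x\<in>?L. \<sigma> x = \<tau> x}"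
    unfolding subfield_def
    using subfieldD[OF subfield_splitting_field] s.zero t.zero s.one t.one s.add t.add s.mult t.mult
      s.uminus t.uminus s.inverse t.inverse
    by auto
  moreover have "croots f \<subseteq> {x\<in>?L. \<sigma> x = \<tau> x}" using eq croots_subset_splitting_field by auto
  ultimately have "?L \<subseteq> {x\<in>?L. \<sigma> x = \<tau> x}" by (rule splitting_field_least)
  thus "\<sigma> x = \<tau> x" using galD(4)[OF \<sigma>] galD(4)[OF \<tau>] by (cases "x \<in> ?L") auto
qed

section \<open>Orbits and cycle types\<close>

definition transitive_on :: "('a \<Rightarrow> 'a) \<Rightarrow> 'a set \<Rightarrow> bool" where
  "transitive_on \<sigma> A \<longleftrightarrow> (\<forall>x\<in>A. \<forall>y\<in>A. \<exists>k. (\<sigma> ^^ k) x = y)"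

lemma orbit_of_iff: "y \<in> orbit_of \<sigma> x \<longleftrightarrow> (\<exists>k. (\<sigma> ^^ k) x = y)"
  by (auto simp: orbit_of_def)

locale permutation_on =
  fixes \<sigma> :: "'a \<Rightarrow> 'a" and S :: "'a set"
  assumes bij: "bij_betw \<sigma> S S" and finite_S: "finite S"
begin

lemma funpow_in: "x \<in> S \<Longrightarrow> (\<sigma> ^^ k) x \<in> S"
  by (induction k) (use bij in \<open>auto simp: bij_betwE\<close>)

lemma funpow_inj: "x \<in> S \<Longrightarrow> y \<in> S \<Longrightarrow> (\<sigma> ^^ k) x = (\<sigma> ^^ k) y \<Longrightarrow> x = y"
proof (induction k)
  case (Suc k)
  thus ?case using bij funpow_in by (simp add: bij_betw_def inj_on_def)
qed simp

lemma funpow_period: "x \<in> S \<Longrightarrow> \<exists>p>0. (\<sigma> ^^ p) x = x"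
proof -
  assume x: "x \<in> S"
  have "range (\<lambda>k. (\<sigma> ^^ k) x) \<subseteq> S" using funpow_in x by auto
  hence "\<not> inj (\<lambda>k. (\<sigma> ^^ k) x)" using finite_S by (meson finite_imageD finite_subset infinite_UNIV_nat)
  then obtain i j where ij: "i < j" "(\<sigma> ^^ i) x = (\<sigma> ^^ j) x"
    unfolding inj_def by (metis linorder_neqE_nat)
  have "(\<sigma> ^^ i) ((\<sigma> ^^ (j - i)) x) = (\<sigma> ^^ (i + (j - i))) x" by (simp add: funpow_add)
  hence "(\<sigma> ^^ i) ((\<sigma> ^^ (j - i)) x) = (\<sigma> ^^ i) x" using ij by simp
  hence "(\<sigma> ^^ (j - i)) x = x" using funpow_inj funpow_in x by blast
  thus ?thesis using ij by (intro exI[of _ "j - i"]) auto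
qed

lemma orbit_of_self: "x \<in> orbit_of \<sigma> x"
  unfolding orbit_of_def by (auto intro: exI[of _ 0])

lemma apply_in_orbit_of: "\<sigma> x \<in> orbit_of \<sigma> x"
  unfolding orbit_of_def by (auto intro: exI[of _ 1])

lemma orbit_of_subset: "x \<in> S \<Longrightarrow> orbit_of \<sigma> x \<subseteq> S"
  by (auto simp: orbit_of_def funpow_in)

lemma orbit_of_eq:
  assumes x: "x \<in> S" and y: "y \<in> orbit_of \<sigma> x"
  shows "orbit_of \<sigma> y = orbit_of \<sigma> x"
proof -
  obtain k where k: "y = (\<sigma> ^^ k) x" using y by (auto simp: orbit_of_def)
  obtain p where p: "p > 0" "(\<sigma> ^^ p) x = x" using funpow_period x by blast
  have period: "(\<sigma> ^^ (p * k)) x = x" using p(2) by (induction k) (simp_all add: funpow_add)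
  have "(\<sigma> ^^ (p * k - k)) y = (\<sigma> ^^ (p * k - k + k)) x" by (simp add: k funpow_add)
  also have "\<dots> = x" using p(1) period by simp
  finally have return: "(\<sigma> ^^ (p * k - k)) y = x" .
  have "(\<sigma> ^^ j) y = (\<sigma> ^^ (j + k)) x" for j unfolding k by (simp add: funpow_add)
  moreover have "(\<sigma> ^^ j) x = (\<sigma> ^^ (j + (p * k - k))) y" for j by (simp add: funpow_add return)
  ultimately show ?thesis unfolding set_eq_iff orbit_of_iff by metis
qed

definition orbits :: "'a set set" where
  "orbits = {orbit_of \<sigma> x | x. x \<in> S}"

lemma finite_orbits: "finite orbits"
  unfolding orbits_def using finite_S by simp

lemma orbit_of_in_orbits: "x \<in> S \<Longrightarrow> orbit_of \<sigma> x \<in> orbits"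
  by (auto simp: orbits_def)

lemma cycle_type_on_orbits: "cycle_type_on \<sigma> S = image_mset card (mset_set orbits)"
  by (simp add: cycle_type_on_def orbits_def)

lemma size_cycle_type_on: "size (cycle_type_on \<sigma> S) = card orbits"
  by (simp add: cycle_type_on_orbits)

lemma count_cycle_type_on: "count (cycle_type_on \<sigma> S) n = card {w\<in>orbits. card w = n}"
proof -
  have "count (cycle_type_on \<sigma> S) n =
      (\<Sum>w | w \<in># mset_set orbits \<and> n = card w. count (mset_set orbits) w)"
    by (simp add: cycle_type_on_orbits count_image_mset')
  also have "\<dots> = (\<Sum>w | w \<in> orbits \<and> n = card w. 1)"
    using finite_orbits by (intro sum.cong) auto
  finally show ?thesis by (simp add: eq_commute)
qed

lemma in_cycle_type_on: "n \<in># cycle_type_on \<sigma> S \<longleftrightarrow> (\<exists>x\<in>S. card (orbit_of \<sigma> x) = n)"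
proof -
  have "n \<in># cycle_type_on \<sigma> S \<longleftrightarrow> n \<in> card ` orbits"
    by (simp add: cycle_type_on_orbits finite_orbits)
  thus ?thesis unfolding orbits_def by blast
qed

lemma fixed_if_orbit_card_1: "card (orbit_of \<sigma> x) = 1 \<Longrightarrow> \<sigma> x = x"
  using orbit_of_self apply_in_orbit_of by (metis card_1_singletonE singletonD)

lemma cycle_type_single:
  assumes "cycle_type_on \<sigma> S = {#n#}"
  shows "card S = n" "transitive_on \<sigma> S"
proof -
  obtain w where w: "orbits = {w}" using size_cycle_type_on assms card_1_singletonE by force
  have all: "x \<in> S \<Longrightarrow> orbit_of \<sigma> x = w" for x using orbit_of_in_orbits w by blast
  have "S \<noteq> {}" using w by (auto simp: orbits_def)
  hence "w = S" using all orbit_of_subset orbit_of_self by blast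
  moreover have "{#card w#} = {#n#}" using assms by (simp add: cycle_type_on_orbits w)
  ultimately show "card S = n" by simp
  show "transitive_on \<sigma> S"
    unfolding transitive_on_def orbit_of_iff[symmetric] using all \<open>w = S\<close> by blast
qed

lemma cycle_type_fixpoint:
  assumes "cycle_type_on \<sigma> S = {#m, 1#}"
  shows "\<exists>p\<in>S. \<sigma> p = p \<and> transitive_on \<sigma> (S - {p})"
proof -
  have "1 \<in># cycle_type_on \<sigma> S" using assms by simp
  then obtain p where p: "p \<in> S" "card (orbit_of \<sigma> p) = 1" unfolding in_cycle_type_on by blast
  have op: "orbit_of \<sigma> p = {p}" using p(2) orbit_of_self by (metis card_1_singletonE singletonD)
  have "orbit_of \<sigma> x = orbit_of \<sigma> y" if x: "x \<in> S - {p}" and y: "y \<in> S - {p}" for x y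
  proof (rule ccontr)
    assume "orbit_of \<sigma> x \<noteq> orbit_of \<sigma> y"
    moreover have "orbit_of \<sigma> x \<noteq> {p}" "orbit_of \<sigma> y \<noteq> {p}" using x y orbit_of_self by blast+
    ultimately have "card {{p}, orbit_of \<sigma> x, orbit_of \<sigma> y} = 3" by simp
    moreover have "{{p}, orbit_of \<sigma> x, orbit_of \<sigma> y} \<subseteq> orbits"
      using orbit_of_in_orbits[OF p(1)] orbit_of_in_orbits x y by (simp add: op)
    ultimately have "3 \<le> card orbits" by (metis card_mono[OF finite_orbits])
    thus False using size_cycle_type_on assms by simp
  qed
  hence "transitive_on \<sigma> (S - {p})"
    unfolding transitive_on_def orbit_of_iff[symmetric] using orbit_of_self by blast
  thus ?thesis using p fixed_if_orbit_card_1 by blast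
qed

lemma cycle_type_transposition:
  assumes ct: "cycle_type_on \<sigma> S = add_mset 2 (replicate_mset n 1)"
  shows "\<exists>a\<in>S. \<exists>b\<in>S. a \<noteq> b \<and> (\<forall>x\<in>S. \<sigma> x = Transposition.transpose a b x)"
proof -
  have "2 \<in># cycle_type_on \<sigma> S" using ct by simp
  then obtain a where a: "a \<in> S" "card (orbit_of \<sigma> a) = 2" unfolding in_cycle_type_on by blast
  define b where "b = \<sigma> a"
  have bS: "b \<in> S" using bij a(1) bij_betwE b_def by blast
  have ab: "a \<noteq> b"
  proof
    assume "a = b"
    hence "\<sigma> a = a" by (simp add: b_def)
    hence "(\<sigma> ^^ k) a = a" for k by (induction k) simp_all
    hence "orbit_of \<sigma> a = {a}" unfolding orbit_of_def by auto
    thus False using a by simp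
  qed
  have "finite (orbit_of \<sigma> a)" using a(2) card_ge_0_finite by force
  moreover have "{a, b} \<subseteq> orbit_of \<sigma> a" using orbit_of_self apply_in_orbit_of b_def by auto
  moreover have "card {a, b} = 2" using ab by simp
  ultimately have orb_a: "orbit_of \<sigma> a = {a, b}" using a(2) card_subset_eq by metis
  have "\<sigma> b \<in> {a, b}" using orbit_of_eq[OF a(1)] orb_a apply_in_orbit_of by blast
  moreover have "\<sigma> b \<noteq> \<sigma> a" using ab bij a(1) bS by (auto simp: b_def bij_betw_def dest: inj_onD)
  ultimately have ba: "\<sigma> b = a" by (auto simp: b_def)
  have "\<sigma> x = x" if x: "x \<in> S" "x \<noteq> a" "x \<noteq> b" for x
  proof -
    have ne: "orbit_of \<sigma> x \<noteq> {a, b}" using x orbit_of_self by blast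
    have "card (orbit_of \<sigma> x) \<in># cycle_type_on \<sigma> S" unfolding in_cycle_type_on using x(1) by blast
    hence "card (orbit_of \<sigma> x) \<in> {1, 2}" using ct by (auto simp: in_replicate_mset split: if_splits)
    moreover have "card (orbit_of \<sigma> x) \<noteq> 2"
    proof
      assume "card (orbit_of \<sigma> x) = 2"
      hence "{{a, b}, orbit_of \<sigma> x} \<subseteq> {w\<in>orbits. card w = 2}"
        using orbit_of_in_orbits[OF a(1)] orbit_of_in_orbits[OF x(1)] a(2) by (simp add: orb_a)
      moreover have "card {{a, b}, orbit_of \<sigma> x} = 2" using ne by simp
      moreover have "finite {w\<in>orbits. card w = 2}" using finite_orbits by simp
      ultimately have "2 \<le> card {w\<in>orbits. card w = 2}" using card_mono by metis
      thus False using count_cycle_type_on[of 2] ct by simp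
    qed
    ultimately show ?thesis using fixed_if_orbit_card_1 by auto
  qed
  hence "\<forall>x\<in>S. \<sigma> x = Transposition.transpose a b x" using ba b_def by (auto simp: transpose_def)
  thus ?thesis using a(1) bS ab by blast
qed

end

section \<open>Groups of permutations\<close>

lemma transpose_apply_inj_on:
  assumes "inj_on k S" "x \<in> S" "y \<in> S" "w \<in> S"
  shows "k (Transposition.transpose x y w) = Transposition.transpose (k x) (k y) (k w)"
proof -
  have "k w = k x \<longleftrightarrow> w = x" "k w = k y \<longleftrightarrow> w = y" using assms inj_onD by metis+
  thus ?thesis unfolding transpose_def by auto
qed

locale perm_group =
  fixes G :: "('a \<Rightarrow> 'a) set" and S :: "'a set"
  assumes finite_S: "finite S"
    and bij: "h \<in> G \<Longrightarrow> bij_betw h S S"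
    and id_in: "id \<in> G"
    and comp_in: "h \<in> G \<Longrightarrow> k \<in> G \<Longrightarrow> h \<circ> k \<in> G"
    and inverse_ex: "h \<in> G \<Longrightarrow> \<exists>h'\<in>G. \<forall>x\<in>S. h' (h x) = x"
begin

definition realized :: "('a \<Rightarrow> 'a) \<Rightarrow> bool" where
  "realized f \<longleftrightarrow> (\<exists>h\<in>G. \<forall>x\<in>S. h x = f x)"

lemma apply_in: "h \<in> G \<Longrightarrow> x \<in> S \<Longrightarrow> h x \<in> S"
  using bij bij_betwE by blast

lemma apply_inj: "h \<in> G \<Longrightarrow> x \<in> S \<Longrightarrow> y \<in> S \<Longrightarrow> h x = h y \<Longrightarrow> x = y"
  using bij by (auto simp: bij_betw_def dest: inj_onD)

lemma permutation_on: "h \<in> G \<Longrightarrow> permutation_on h S"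
  using bij finite_S by (simp add: permutation_on_def)

lemma funpow_in: "h \<in> G \<Longrightarrow> h ^^ k \<in> G"
  by (induction k) (simp_all add: id_in comp_in)

lemma realizedI: "h \<in> G \<Longrightarrow> (\<And>x. x \<in> S \<Longrightarrow> h x = f x) \<Longrightarrow> realized f"
  unfolding realized_def by blast

lemma realized_id: "realized id"
  using id_in by (auto intro: realizedI)

lemma realized_comp:
  assumes "realized f" "realized f'" "\<forall>x\<in>S. f' x \<in> S"
  shows "realized (f \<circ> f')"
proof -
  obtain h h' where "h \<in> G" "\<forall>x\<in>S. h x = f x" "h' \<in> G" "\<forall>x\<in>S. h' x = f' x"
    using assms(1,2) by (auto simp: realized_def)
  thus ?thesis using assms(3) comp_in by (intro realizedI[of "h \<circ> h'"]) auto
qed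

lemma realized_transpose_sym: "realized (Transposition.transpose a b) \<Longrightarrow> realized (Transposition.transpose b a)"
  by (simp add: transpose_commute)

lemma realized_transpose_conj:
  assumes r: "realized (Transposition.transpose a b)" and k: "k \<in> G" and a: "a \<in> S" and b: "b \<in> S"
  shows "realized (Transposition.transpose (k a) (k b))"
proof -
  obtain h where h: "h \<in> G" "\<forall>x\<in>S. h x = Transposition.transpose a b x"
    using r by (auto simp: realized_def)
  obtain k' where k': "k' \<in> G" "\<forall>x\<in>S. k' (k x) = x" using inverse_ex k by blast
  have kk': "k (k' z) = z" if "z \<in> S" for z
  proof -
    have "z \<in> k ` S" using bij_betw_imp_surj_on[OF bij[OF k]] that by simp
    then obtain w where "w \<in> S" "z = k w" by blast
    thus ?thesis using k'(2) by simp
  qed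
  show ?thesis
  proof (rule realizedI[of "k \<circ> h \<circ> k'"])
    show "k \<circ> h \<circ> k' \<in> G" using comp_in[OF comp_in[OF k h(1)] k'(1)] .
    fix z assume z: "z \<in> S"
    have "(k \<circ> h \<circ> k') z = k (Transposition.transpose a b (k' z))" using h(2) apply_in[OF k'(1) z] by simp
    also have "\<dots> = Transposition.transpose (k a) (k b) (k (k' z))"
      using bij_betw_imp_inj_on[OF bij[OF k]] a b apply_in[OF k'(1) z] by (rule transpose_apply_inj_on)
    also have "\<dots> = Transposition.transpose (k a) (k b) z" using kk'[OF z] by simp
    finally show "(k \<circ> h \<circ> k') z = Transposition.transpose (k a) (k b) z" .
  qed
qed

lemma realized_transpose_trans:
  assumes "realized (Transposition.transpose x y)" "realized (Transposition.transpose y z)"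
    and "x \<noteq> y" "y \<noteq> z" "x \<noteq> z" "x \<in> S" "y \<in> S" "z \<in> S"
  shows "realized (Transposition.transpose x z)"
proof -
  have eq: "Transposition.transpose x z =
      Transposition.transpose x y \<circ> Transposition.transpose y z \<circ> Transposition.transpose x y"
    using assms(3-5) by (simp add: fun_eq_iff transpose_def)
  have tx: "\<forall>w\<in>S. Transposition.transpose x y w \<in> S"
    and ty: "\<forall>w\<in>S. Transposition.transpose y z w \<in> S"
    using assms(6-8) by (auto simp: transpose_def)
  have "realized (Transposition.transpose x y \<circ> Transposition.transpose y z)"
    by (rule realized_comp[OF assms(1,2) ty])
  hence "realized (Transposition.transpose x y \<circ> Transposition.transpose y z \<circ> Transposition.transpose x y)"
    by (rule realized_comp[OF _ assms(1) tx])
  thus ?thesis by (simp only: eq)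
qed

text \<open>Conjugating \<open>(a b)\<close> by powers of \<open>c\<close> gives every point a transposition partner;
  conjugating by powers of \<open>d\<close> then links \<open>p\<close> with every other point.\<close>

lemma all_transpositions_realized:
  assumes ab: "a \<in> S" "b \<in> S" "a \<noteq> b" "realized (Transposition.transpose a b)"
    and c: "c \<in> G" "transitive_on c S"
    and d: "d \<in> G" "p \<in> S" "d p = p" "transitive_on d (S - {p})"
    and xy: "x \<in> S" "y \<in> S"
  shows "realized (Transposition.transpose x y)"
proof -
  have partner: "\<exists>y\<in>S. y \<noteq> x \<and> realized (Transposition.transpose x y)" if x: "x \<in> S" for x
  proof -
    obtain k where k: "(c ^^ k) a = x" using c(2) ab(1) x by (auto simp: transitive_on_def)
    have "realized (Transposition.transpose x ((c ^^ k) b))"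
      using realized_transpose_conj[OF ab(4) funpow_in[OF c(1), of k] ab(1,2)] k by simp
    moreover have "(c ^^ k) b \<noteq> x"
      using permutation_on.funpow_inj[OF permutation_on[OF c(1)] ab(1,2)] k ab(3) by metis
    ultimately show ?thesis using permutation_on.funpow_in[OF permutation_on[OF c(1)] ab(2)] by blast
  qed
  obtain y0 where y0: "y0 \<in> S" "y0 \<noteq> p" "realized (Transposition.transpose p y0)"
    using partner d(2) by blast
  have from_p: "realized (Transposition.transpose p z)" if z: "z \<in> S" "z \<noteq> p" for z
  proof -
    obtain k where k: "(d ^^ k) y0 = z" using d(4) y0 z by (auto simp: transitive_on_def)
    have "(d ^^ k) p = p" using d(3) by (induction k) simp_all
    thus ?thesis using realized_transpose_conj[OF y0(3) funpow_in[OF d(1), of k] d(2) y0(1)] k by simp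
  qed
  consider "x = y" | "x = p" "y \<noteq> p" | "y = p" "x \<noteq> p" | "x \<noteq> y" "x \<noteq> p" "y \<noteq> p" by blast
  thus ?thesis
  proof cases
    case 1 thus ?thesis using realized_id by simp
  next
    case 2 thus ?thesis using from_p xy by simp
  next
    case 3 thus ?thesis using from_p xy realized_transpose_sym by simp
  next
    case 4
    have "realized (Transposition.transpose x p)" using from_p[OF xy(1) 4(2)] by (rule realized_transpose_sym)
    thus ?thesis using realized_transpose_trans from_p[OF xy(2) 4(3)] 4 xy d(2) by blast
  qed
qed

lemma realized_if_permutes:
  assumes transpositions: "\<And>a b. a \<in> S \<Longrightarrow> b \<in> S \<Longrightarrow> realized (Transposition.transpose a b)"
    and \<rho>: "\<rho> permutes S"
  shows "realized \<rho>"
  using \<rho> finite_S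
proof (induction \<rho> rule: permutes_induct)
  case id show ?case by (rule realized_id)
next
  case (swap a b p)
  have "\<forall>x\<in>S. p x \<in> S" using \<open>p permutes S\<close> by (simp add: permutes_in_image)
  thus ?case by (rule realized_comp[OF transpositions[OF swap(1,2)] \<open>realized p\<close>])
qed

end

lemma perm_group_gal:
  assumes "f \<noteq> 0"
  shows "perm_group (gal f) (croots f)"
proof
  show "finite (croots f)" using finite_croots[OF assms] .
  show "id \<in> gal f" by (rule gal_id)
  fix h k assume h: "h \<in> gal f"
  show "bij_betw h (croots f) (croots f)" using gal_bij_croots[OF h assms] .
  show "\<exists>h'\<in>gal f. \<forall>x\<in>croots f. h' (h x) = x" using gal_inverse[OF h] by auto
  assume "k \<in> gal f"
  thus "h \<circ> k \<in> gal f" by (rule gal_comp[OF h])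
qed

section \<open>Quadratic extensions\<close>

definition quadratic_over :: "complex set \<Rightarrow> complex \<Rightarrow> bool" where
  "quadratic_over F z \<longleftrightarrow> (\<exists>t\<in>F. \<exists>s\<in>F. z\<^sup>2 = t * z - s)"

text \<open>For \<open>z\<close> quadratic over a subfield \<open>F\<close>, this is the field \<open>F(z)\<close>.\<close>

definition adjoin :: "complex set \<Rightarrow> complex \<Rightarrow> complex set" where
  "adjoin F z = {a + b * z | a b. a \<in> F \<and> b \<in> F}"

lemma adjoinI: "a \<in> F \<Longrightarrow> b \<in> F \<Longrightarrow> a + b * z \<in> adjoin F z"
  unfolding adjoin_def by blast

lemma adjoinE: "x \<in> adjoin F z \<Longrightarrow> (\<And>a b. x = a + b * z \<Longrightarrow> a \<in> F \<Longrightarrow> b \<in> F \<Longrightarrow> P) \<Longrightarrow> P"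
  unfolding adjoin_def by blast

lemma subset_adjoin: "0 \<in> F \<Longrightarrow> F \<subseteq> adjoin F z"
  using adjoinI[of _ F 0 z] by fastforce

lemma mem_adjoin: "0 \<in> F \<Longrightarrow> 1 \<in> F \<Longrightarrow> z \<in> adjoin F z"
  using adjoinI[of 0 F 1 z] by simp

lemma adjoin_subset: "subfield L \<Longrightarrow> F \<subseteq> L \<Longrightarrow> z \<in> L \<Longrightarrow> adjoin F z \<subseteq> L"
  by (auto elim!: adjoinE simp: subfieldD subset_iff)

lemma adjoin_eq_self: "subfield F \<Longrightarrow> z \<in> F \<Longrightarrow> adjoin F z = F"
  using subset_adjoin adjoin_subset[of F F z] subfieldD(1) by blast

lemma quadratic_over_mono: "quadratic_over F z \<Longrightarrow> F \<subseteq> F' \<Longrightarrow> quadratic_over F' z"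
  unfolding quadratic_over_def by blast

lemma quadratic_root_exists: "\<exists>w::complex. w\<^sup>2 = t * w - s"
proof -
  define w where "w = (t + csqrt (t\<^sup>2 - 4 * s)) / 2"
  have "2 * w - t = csqrt (t\<^sup>2 - 4 * s)" unfolding w_def by (simp add: field_simps)
  hence "(2 * w - t)\<^sup>2 = t\<^sup>2 - 4 * s" by simp
  hence "4 * (w\<^sup>2 - (t * w - s)) = 0" by (simp add: algebra_simps power2_eq_square)
  hence "w\<^sup>2 - (t * w - s) = 0" by (simp only: mult_eq_0_iff) simp
  hence "w\<^sup>2 = t * w - s" by simp
  thus ?thesis ..
qed

lemma quadratic_roots:
  fixes z v t s :: complex
  assumes "z\<^sup>2 = t * z - s" "v\<^sup>2 = t * v - s"
  shows "z = v \<or> z = t - v"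
proof -
  have "(z - v) * (z + v - t) = z\<^sup>2 - t * z - (v\<^sup>2 - t * v)"
    by (simp add: algebra_simps power2_eq_square)
  hence "(z - v) * (z + v - t) = 0" using assms by simp
  thus ?thesis by auto
qed

lemma adjoin_eq_iff:
  assumes F: "subfield F" and z: "z \<notin> F" and "a \<in> F" "b \<in> F" "c \<in> F" "d \<in> F"
  shows "a + b * z = c + d * z \<longleftrightarrow> a = c \<and> b = d"
proof
  assume eq: "a + b * z = c + d * z"
  show "a = c \<and> b = d"
  proof (cases "b = d")
    case False
    hence "z = (a - c) / (d - b)" using eq by (simp add: field_simps)
    moreover have "(a - c) / (d - b) \<in> F" using assms by (auto intro: subfield_diff subfield_divide)
    ultimately show ?thesis using z by simp
  qed (use eq in simp)
qed simp

lemma adjoin_mult: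
  fixes a b c d z t s :: complex
  assumes "z\<^sup>2 = t * z - s"
  shows "(a + b * z) * (c + d * z) = (a * c - b * d * s) + (a * d + b * c + b * d * t) * z"
proof -
  have "(a + b * z) * (c + d * z) = a * c + (a * d + b * c) * z + b * d * z\<^sup>2"
    by (simp add: algebra_simps power2_eq_square)
  thus ?thesis unfolding assms by (simp add: algebra_simps)
qed

text \<open>The inverse of \<open>a + b z\<close> is obtained by multiplying with the conjugate \<open>a + b (t - z)\<close>,
  whose product with \<open>a + b z\<close> is the norm \<open>a\<^sup>2 + a b t + b\<^sup>2 s \<in> F\<close>.\<close>

lemma subfield_adjoin:
  assumes F: "subfield F" and q: "quadratic_over F z"
  shows "subfield (adjoin F z)"
proof (cases "z \<in> F")
  case True thus ?thesis using adjoin_eq_self F by simp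
next
  case zF: False
  obtain t s where ts: "t \<in> F" "s \<in> F" and z: "z\<^sup>2 = t * z - s" using q by (auto simp: quadratic_over_def)
  note F' = subfieldD[OF F]
  show ?thesis unfolding subfield_def
  proof (intro conjI ballI)
    show "0 \<in> adjoin F z" "1 \<in> adjoin F z" using subset_adjoin F' by blast+
  next
    fix x y assume "x \<in> adjoin F z" "y \<in> adjoin F z"
    then obtain a b c d where x: "x = a + b * z" "a \<in> F" "b \<in> F" and y: "y = c + d * z" "c \<in> F" "d \<in> F"
      by (metis adjoinE)
    have "x + y = (a + c) + (b + d) * z" using x y by (simp add: algebra_simps)
    thus "x + y \<in> adjoin F z" by (simp only:) (rule adjoinI; use x y F' in blast)
    show "x * y \<in> adjoin F z"
      unfolding x y adjoin_mult[OF z] by (rule adjoinI) (use x y ts F' subfield_diff[OF F] in auto)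
  next
    fix x assume "x \<in> adjoin F z"
    then obtain a b where x: "x = a + b * z" "a \<in> F" "b \<in> F" by (rule adjoinE)
    have "- x = (- a) + (- b) * z" using x by simp
    thus "- x \<in> adjoin F z" using x F' adjoinI by metis
    show "inverse x \<in> adjoin F z"
    proof (cases "x = 0")
      case True thus ?thesis using subset_adjoin F' by auto
    next
      case x0: False
      define N where "N = a * a + a * b * t + b * b * s"
      have NF: "N \<in> F" unfolding N_def using F' x ts by auto
      have "a + b * (t - z) \<noteq> 0"
      proof
        assume conj0: "a + b * (t - z) = 0"
        have "b \<noteq> 0" using conj0 x x0 by auto
        hence "z = (a + b * t) / b" using conj0 by (simp add: field_simps)
        moreover have "(a + b * t) / b \<in> F" using x ts F' subfield_divide[OF F] by simp
        ultimately show False using zF by simp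
      qed
      moreover have "x * (a + b * (t - z)) = a * a + a * b * t + b * b * (t * z - z\<^sup>2)"
        using x by (simp add: algebra_simps power2_eq_square)
      hence norm: "x * (a + b * (t - z)) = N" unfolding N_def z by simp
      ultimately have N0: "N \<noteq> 0" using x0 by auto
      have "inverse x = inverse x * (x * (a + b * (t - z))) / N" using N0 by (simp add: norm)
      also have "\<dots> = (a + b * (t - z)) / N" using x0 by (simp flip: mult.assoc)
      also have "\<dots> = (a + b * t) / N + (- b / N) * z" using N0 by (simp add: divide_simps algebra_simps)
      finally have "inverse x = (a + b * t) / N + (- b / N) * z" .
      thus ?thesis by (simp only:) (rule adjoinI; use NF x ts F' subfield_divide[OF F] in auto)
    qed
  qed
qed

text \<open>An embedding of \<open>F\<close> extends to \<open>F(z)\<close> by sending \<open>z\<close> to a root \<open>w\<close> of the image of its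
  quadratic equation; if \<open>z \<notin> F\<close> then also \<open>w \<notin> \<phi> ` F\<close>, so \<open>a + b z \<mapsto> \<phi> a + \<phi> b w\<close> is well defined
  and injective.\<close>

lemma field_embedding_extend_adjoin:
  assumes \<phi>: "field_embedding F \<phi>" and q: "quadratic_over F z"
  shows "\<exists>\<phi>'. field_embedding (adjoin F z) \<phi>' \<and> (\<forall>x\<in>F. \<phi>' x = \<phi> x) \<and>
    \<phi>' ` adjoin F z = adjoin (\<phi> ` F) (\<phi>' z)"
proof -
  interpret field_embedding F \<phi> by (rule \<phi>)
  note F' = subfieldD[OF subfield_F]
  show ?thesis
  proof (cases "z \<in> F")
    case True
    hence "adjoin (\<phi> ` F) (\<phi> z) = \<phi> ` F" using adjoin_eq_self[OF subfield_image] by simp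
    thus ?thesis using \<phi> adjoin_eq_self[OF subfield_F True] by auto
  next
    case zF: False
    obtain t s where ts: "t \<in> F" "s \<in> F" and z: "z\<^sup>2 = t * z - s" using q by (auto simp: quadratic_over_def)
    obtain w where w: "w\<^sup>2 = \<phi> t * w - \<phi> s" using quadratic_root_exists by blast
    have wF: "w \<notin> \<phi> ` F"
    proof
      assume "w \<in> \<phi> ` F"
      then obtain v where v: "v \<in> F" "w = \<phi> v" by auto
      have "\<phi> (v\<^sup>2) = \<phi> (t * v - s)"
        using v ts w F' by (simp add: power mult diff)
      hence "v\<^sup>2 = t * v - s"
        using eq_iff v ts F' by (simp add: subfield_diff[OF subfield_F] subfield_power[OF subfield_F])
      hence "z = v \<or> z = t - v" using quadratic_roots z by blast
      thus False using zF v ts subfield_diff[OF subfield_F] by auto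
    qed
    have im_subfield: "subfield (\<phi> ` F)" by (rule subfield_image)
    define \<phi>' where "\<phi>' x = (THE u. \<exists>a\<in>F. \<exists>b\<in>F. x = a + b * z \<and> u = \<phi> a + \<phi> b * w)" for x
    have \<phi>': "\<phi>' (a + b * z) = \<phi> a + \<phi> b * w" if "a \<in> F" "b \<in> F" for a b
      unfolding \<phi>'_def
    proof (rule the_equality)
      show "\<exists>a'\<in>F. \<exists>b'\<in>F. a + b * z = a' + b' * z \<and> \<phi> a + \<phi> b * w = \<phi> a' + \<phi> b' * w"
        using that by blast
      fix u assume "\<exists>a'\<in>F. \<exists>b'\<in>F. a + b * z = a' + b' * z \<and> u = \<phi> a' + \<phi> b' * w"
      then obtain a' b' where "a' \<in> F" "b' \<in> F" "a + b * z = a' + b' * z" "u = \<phi> a' + \<phi> b' * w"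
        by blast
      thus "u = \<phi> a + \<phi> b * w" using adjoin_eq_iff[OF subfield_F zF that] by simp
    qed
    have \<phi>'_F: "\<phi>' x = \<phi> x" if "x \<in> F" for x using \<phi>'[of x 0] that F' by (simp add: zero)
    have "field_embedding (adjoin F z) \<phi>'"
    proof
      show "subfield (adjoin F z)" using subfield_adjoin[OF subfield_F q] .
      show "\<phi>' 1 = 1" using \<phi>'_F F'(2) one by simp
      fix x y assume "x \<in> adjoin F z" "y \<in> adjoin F z"
      then obtain a b c d where x: "x = a + b * z" "a \<in> F" "b \<in> F" and y: "y = c + d * z" "c \<in> F" "d \<in> F"
        by (metis adjoinE)
      have "x + y = (a + c) + (b + d) * z" using x y by (simp add: algebra_simps)
      hence "\<phi>' (x + y) = \<phi> (a + c) + \<phi> (b + d) * w" by (simp only:) (rule \<phi>'; use x y F' in blast)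
      thus "\<phi>' (x + y) = \<phi>' x + \<phi>' y" using x y by (simp add: \<phi>' add algebra_simps)
      have "\<phi>' (x * y) = \<phi> (a * c - b * d * s) + \<phi> (a * d + b * c + b * d * t) * w"
        unfolding x y adjoin_mult[OF z] by (rule \<phi>') (use x y ts F' subfield_diff[OF subfield_F] in auto)
      also have "\<dots> = (\<phi> a + \<phi> b * w) * (\<phi> c + \<phi> d * w)"
        unfolding adjoin_mult[OF w] using x y ts F' by (simp add: add mult diff subfield_diff[OF subfield_F])
      finally show "\<phi>' (x * y) = \<phi>' x * \<phi>' y" using x y by (simp add: \<phi>')
    next
      show "inj_on \<phi>' (adjoin F z)"
      proof (rule inj_onI)
        fix x y assume "x \<in> adjoin F z" "y \<in> adjoin F z" and e: "\<phi>' x = \<phi>' y"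
        then obtain a b c d where x: "x = a + b * z" "a \<in> F" "b \<in> F" and y: "y = c + d * z" "c \<in> F" "d \<in> F"
          by (metis adjoinE)
        have "\<phi> a + \<phi> b * w = \<phi> c + \<phi> d * w" using e x y by (simp add: \<phi>')
        hence "\<phi> a = \<phi> c \<and> \<phi> b = \<phi> d" using adjoin_eq_iff[OF im_subfield wF] x y by simp
        thus "x = y" using eq_iff x y by simp
      qed
    qed
    moreover have "\<phi>' z = w" using \<phi>'[of 0 1] F' zero one by simp
    moreover have "\<phi>' ` adjoin F z = adjoin (\<phi> ` F) w"
    proof
      show "\<phi>' ` adjoin F z \<subseteq> adjoin (\<phi> ` F) w"
      proof
        fix u assume "u \<in> \<phi>' ` adjoin F z"
        then obtain a b where "a \<in> F" "b \<in> F" "u = \<phi>' (a + b * z)" by (auto elim: adjoinE)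
        thus "u \<in> adjoin (\<phi> ` F) w" by (simp add: \<phi>' adjoinI)
      qed
      show "adjoin (\<phi> ` F) w \<subseteq> \<phi>' ` adjoin F z"
      proof
        fix u assume "u \<in> adjoin (\<phi> ` F) w"
        then obtain a b where "a \<in> F" "b \<in> F" "u = \<phi> a + \<phi> b * w" by (auto elim!: adjoinE)
        hence "u = \<phi>' (a + b * z)" "a + b * z \<in> adjoin F z" by (simp_all add: \<phi>' adjoinI)
        thus "u \<in> \<phi>' ` adjoin F z" by blast
      qed
    qed
    ultimately show ?thesis using \<phi>'_F by blast
  qed
qed

fun adjoin_list :: "complex set \<Rightarrow> complex list \<Rightarrow> complex set" where
  "adjoin_list F [] = F"
| "adjoin_list F (z # zs) = adjoin_list (adjoin F z) zs"

lemma subset_adjoin_list: "0 \<in> F \<Longrightarrow> F \<subseteq> adjoin_list F zs"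
proof (induction zs arbitrary: F)
  case (Cons z zs)
  have "F \<subseteq> adjoin F z" using subset_adjoin[OF Cons.prems] .
  moreover have "adjoin F z \<subseteq> adjoin_list (adjoin F z) zs" using Cons.IH \<open>F \<subseteq> adjoin F z\<close> Cons.prems by blast
  ultimately show ?case by simp
qed simp

lemma set_subset_adjoin_list: "0 \<in> F \<Longrightarrow> 1 \<in> F \<Longrightarrow> set zs \<subseteq> adjoin_list F zs"
proof (induction zs arbitrary: F)
  case (Cons z zs)
  have 01: "0 \<in> adjoin F z" "1 \<in> adjoin F z" using subset_adjoin Cons.prems by blast+
  have "z \<in> adjoin_list (adjoin F z) zs" using mem_adjoin[OF Cons.prems] subset_adjoin_list[OF 01(1)] by blast
  thus ?case using Cons.IH[OF 01] by simp
qed simp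

lemma adjoin_list_subset: "subfield L \<Longrightarrow> F \<subseteq> L \<Longrightarrow> set zs \<subseteq> L \<Longrightarrow> adjoin_list F zs \<subseteq> L"
  by (induction zs arbitrary: F) (simp_all add: adjoin_subset)

lemma field_embedding_extend_adjoin_list:
  assumes "field_embedding F \<phi>" "\<forall>z\<in>set zs. quadratic_over F z"
  shows "\<exists>\<phi>'. field_embedding (adjoin_list F zs) \<phi>' \<and> (\<forall>x\<in>F. \<phi>' x = \<phi> x) \<and>
    \<phi>' ` adjoin_list F zs = adjoin_list (\<phi> ` F) (map \<phi>' zs)"
  using assms
proof (induction zs arbitrary: F \<phi>)
  case (Cons z zs)
  have "quadratic_over F z" using Cons.prems(2) by simp
  then obtain \<phi>1 where \<phi>1: "field_embedding (adjoin F z) \<phi>1" "\<forall>x\<in>F. \<phi>1 x = \<phi> x"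
      "\<phi>1 ` adjoin F z = adjoin (\<phi> ` F) (\<phi>1 z)"
    using field_embedding_extend_adjoin[OF Cons.prems(1)] by blast
  have F_sub: "F \<subseteq> adjoin F z"
    using subset_adjoin subfieldD(1) field_embedding.subfield_F[OF Cons.prems(1)] by blast
  hence "\<forall>z'\<in>set zs. quadratic_over (adjoin F z) z'" using Cons.prems(2) quadratic_over_mono by auto
  then obtain \<phi>' where \<phi>': "field_embedding (adjoin_list (adjoin F z) zs) \<phi>'"
      "\<forall>x\<in>adjoin F z. \<phi>' x = \<phi>1 x"
      "\<phi>' ` adjoin_list (adjoin F z) zs = adjoin_list (\<phi>1 ` adjoin F z) (map \<phi>' zs)"
    using Cons.IH \<phi>1(1) by blast
  have "z \<in> adjoin F z"
    using mem_adjoin subfieldD(1,2)[OF field_embedding.subfield_F[OF Cons.prems(1)]] by blast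
  hence "\<phi>' z = \<phi>1 z" using \<phi>'(2) by blast
  moreover have "\<forall>x\<in>F. \<phi>' x = \<phi> x" using \<phi>'(2) \<phi>1(2) F_sub by (simp add: subset_iff)
  ultimately show ?case using \<phi>'(1,3) \<phi>1(3) by (intro exI[of _ \<phi>']) simp
qed auto

section \<open>Roots of \<open>P\<close> and \<open>Q\<close>\<close>

locale weil_polynomials =
  fixes P Q :: "int poly" and q g :: nat
  assumes q_pos: "q > 0" and P_nz: "P \<noteq> 0" and Q_nz: "Q \<noteq> 0"
    and zero_notin_croots_P: "0 \<notin> croots P"
    and P_Q: "\<forall>x::complex. x \<noteq> 0 \<longrightarrow>
      poly (map_poly of_int P) x = x ^ g * poly (map_poly of_int Q) (x + of_nat q / x)"
begin

abbreviation cq :: complex where "cq \<equiv> of_nat q"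

definition tr :: "complex \<Rightarrow> complex" where "tr z = z + cq / z"

sublocale GP: perm_group "gal P" "croots P" by (rule perm_group_gal[OF P_nz])
sublocale GQ: perm_group "gal Q" "croots Q" by (rule perm_group_gal[OF Q_nz])

lemma cq_nz: "cq \<noteq> 0"
  using q_pos by simp

lemma croots_P_iff: "z \<in> croots P \<longleftrightarrow> z \<noteq> 0 \<and> tr z \<in> croots Q"
  using P_Q zero_notin_croots_P by (cases "z = 0") (auto simp: croots_def tr_def)

lemma tr_quadratic: "z \<noteq> 0 \<Longrightarrow> z\<^sup>2 = tr z * z - cq"
  unfolding tr_def by (simp add: field_simps power2_eq_square)

lemma tr_eq_if_quadratic:
  assumes "w\<^sup>2 = u * w - cq"
  shows "w \<noteq> 0" "tr w = u"
proof -
  show w: "w \<noteq> 0" using assms cq_nz by auto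
  show "tr w = u" using assms w unfolding tr_def by (simp add: field_simps power2_eq_square)
qed

lemma croots_Q_tr: "t \<in> croots Q \<Longrightarrow> \<exists>z\<in>croots P. tr z = t"
  using quadratic_root_exists[of t cq] tr_eq_if_quadratic croots_P_iff by metis

lemma dual_dual: "cq / (cq / z) = z"
  using cq_nz by simp

lemma tr_dual: "tr (cq / z) = tr z"
  unfolding tr_def using dual_dual by simp

lemma dual_in_croots_P: "z \<in> croots P \<Longrightarrow> cq / z \<in> croots P"
  using croots_P_iff tr_dual cq_nz by simp

lemma tr_eq_imp_dual:
  assumes "z \<in> croots P" "r \<in> croots P" "tr r = tr z"
  shows "r = z \<or> r = cq / z"
proof -
  have "r\<^sup>2 = tr z * r - cq" "z\<^sup>2 = tr z * z - cq" using tr_quadratic croots_P_iff assms by auto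
  hence "r = z \<or> r = tr z - z" by (rule quadratic_roots)
  thus ?thesis by (simp add: tr_def)
qed

lemma croots_Q_subset: "croots Q \<subseteq> splitting_field P"
proof
  fix t assume "t \<in> croots Q"
  then obtain z where z: "z \<in> croots P" "tr z = t" using croots_Q_tr by blast
  hence "z \<in> splitting_field P" "cq / z \<in> splitting_field P"
    using dual_in_croots_P croots_subset_splitting_field by blast+
  thus "t \<in> splitting_field P" using z(2) subfieldD(3)[OF subfield_splitting_field] by (auto simp: tr_def)
qed

lemma splitting_field_Q_subset: "splitting_field Q \<subseteq> splitting_field P"
  by (rule splitting_field_least[OF subfield_splitting_field croots_Q_subset])

lemma gal_P_dual: "\<sigma> \<in> gal P \<Longrightarrow> z \<in> croots P \<Longrightarrow> \<sigma> (cq / z) = cq / \<sigma> z"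
  using field_embedding.divide[OF gal_field_embedding subfield_of_nat[OF subfield_splitting_field]]
    field_embedding.of_nat[OF gal_field_embedding] croots_subset_splitting_field by fastforce

lemma gal_P_tr: "\<sigma> \<in> gal P \<Longrightarrow> z \<in> croots P \<Longrightarrow> \<sigma> (tr z) = tr (\<sigma> z)"
  using field_embedding.add[OF gal_field_embedding] gal_P_dual
    subfield_divide[OF subfield_splitting_field subfield_of_nat[OF subfield_splitting_field]]
    croots_subset_splitting_field unfolding tr_def by fastforce

text \<open>The splitting field of \<open>P\<close> arises from that of \<open>Q\<close> by adjoining the roots of \<open>P\<close>, each
  quadratic over it. An extension \<open>\<phi>\<close> of \<open>\<tau> \<in> Gal(Q)\<close> maps roots of \<open>P\<close> injectively to roots of \<open>P\<close>,
  hence onto them, and therefore maps the splitting field of \<open>P\<close> onto itself.\<close>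

lemma gal_Q_extends:
  assumes \<tau>: "\<tau> \<in> gal Q"
  shows "\<exists>\<sigma>\<in>gal P. \<forall>t\<in>croots Q. \<sigma> t = \<tau> t"
proof -
  let ?L = "splitting_field P" and ?K = "splitting_field Q"
  note L = subfield_splitting_field[of P] and K = subfield_splitting_field[of Q]
  obtain zs where zs: "set zs = croots P" using finite_list[OF finite_croots[OF P_nz]] by blast
  have "quadratic_over ?K z" if "z \<in> croots P" for z
    unfolding quadratic_over_def using that croots_P_iff tr_quadratic subfield_of_nat[OF K]
      croots_subset_splitting_field by blast
  then obtain \<phi> where \<phi>: "field_embedding (adjoin_list ?K zs) \<phi>" "\<forall>x\<in>?K. \<phi> x = \<tau> x"
      "\<phi> ` adjoin_list ?K zs = adjoin_list (\<tau> ` ?K) (map \<phi> zs)"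
    using field_embedding_extend_adjoin_list[OF gal_field_embedding[OF \<tau>]] zs by blast
  have Lzs: "adjoin_list ?K zs = ?L"
  proof
    show "adjoin_list ?K zs \<subseteq> ?L"
      using adjoin_list_subset[OF L splitting_field_Q_subset] zs croots_subset_splitting_field by blast
    show "?L \<subseteq> adjoin_list ?K zs"
      using splitting_field_least[OF field_embedding.subfield_F[OF \<phi>(1)]]
        set_subset_adjoin_list[OF subfieldD(1,2)[OF K]] zs by blast
  qed
  interpret \<phi>: field_embedding ?L \<phi> using \<phi>(1) Lzs by simp
  have \<phi>_root: "\<phi> z \<in> croots P" if z: "z \<in> croots P" for z
  proof -
    have zL: "z \<in> ?L" "tr z \<in> ?K" using z croots_P_iff croots_subset_splitting_field by blast+
    have "\<phi> (z\<^sup>2) = \<phi> (tr z * z - cq)" using z croots_P_iff tr_quadratic by simp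
    hence "(\<phi> z)\<^sup>2 = \<tau> (tr z) * \<phi> z - cq"
      using zL splitting_field_Q_subset \<phi>(2) by (auto simp: \<phi>.power \<phi>.diff \<phi>.mult \<phi>.of_nat
          subfield_of_nat[OF L] subfieldD(4)[OF L])
    moreover have "\<tau> (tr z) \<in> croots Q" using z croots_P_iff GQ.apply_in[OF \<tau>] by blast
    ultimately show ?thesis using tr_eq_if_quadratic croots_P_iff by metis
  qed
  have roots: "\<phi> ` croots P = croots P"
    using endo_inj_surj[OF finite_croots[OF P_nz]] \<phi>_root
      inj_on_subset[OF \<phi>.inj croots_subset_splitting_field] by blast
  have "\<phi> ` ?L = ?L"
  proof
    have "\<tau> ` ?K = ?K" using galD(1)[OF \<tau>] by (simp add: bij_betw_def)
    hence "\<phi> ` ?L = adjoin_list ?K (map \<phi> zs)" using \<phi>(3) Lzs by simp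
    thus "\<phi> ` ?L \<subseteq> ?L"
      using adjoin_list_subset[OF L splitting_field_Q_subset] roots zs croots_subset_splitting_field
      by simp
    show "?L \<subseteq> \<phi> ` ?L"
      using splitting_field_least[OF \<phi>.subfield_image] roots croots_subset_splitting_field by blast
  qed
  define \<sigma> where "\<sigma> x = (if x \<in> ?L then \<phi> x else x)" for x
  have "\<sigma> \<in> gal P"
    unfolding gal_def
  proof (intro CollectI conjI ballI allI impI)
    show "bij_betw \<sigma> ?L ?L"
      using \<phi>.inj \<open>\<phi> ` ?L = ?L\<close> by (simp add: bij_betw_def \<sigma>_def cong: inj_on_cong image_cong)
    fix x y assume "x \<in> ?L" "y \<in> ?L"
    thus "\<sigma> (x + y) = \<sigma> x + \<sigma> y" "\<sigma> (x * y) = \<sigma> x * \<sigma> y"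
      using \<phi>.add \<phi>.mult subfieldD(3,4)[OF L] by (simp_all add: \<sigma>_def)
  qed (simp add: \<sigma>_def)
  moreover have "\<forall>t\<in>croots Q. \<sigma> t = \<tau> t"
    using \<phi>(2) croots_Q_subset croots_subset_splitting_field by (auto simp: \<sigma>_def)
  ultimately show ?thesis by blast
qed

end

section \<open>The group \<open>W\<^sub>2\<^sub>g\<close>\<close>

definition mate :: "nat \<Rightarrow> nat" where
  "mate i = (if odd i then i + 1 else i - 1)"

lemma mate_in: "i \<in> {1..2 * g} \<Longrightarrow> mate i \<in> {1..2 * g}"
  unfolding mate_def by (auto; presburger)

lemma mate_mate: "i \<ge> 1 \<Longrightarrow> mate (mate i) = i"
  unfolding mate_def by (auto; presburger)

lemma mate_neq: "i \<ge> 1 \<Longrightarrow> mate i \<noteq> i"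
  unfolding mate_def by (auto; presburger)

lemma pairs2_iff: "p \<in> pairs2 g \<longleftrightarrow> (\<exists>i\<in>{1..2 * g}. p = {i, mate i})"
proof
  assume "p \<in> pairs2 g"
  then obtain k where "p = {2 * k - 1, 2 * k}" "1 \<le> k" "k \<le> g" unfolding pairs2_def by blast
  moreover have "mate (2 * k - 1) = 2 * k" if "k \<ge> 1" for k
    using that unfolding mate_def by (auto; presburger)
  ultimately show "\<exists>i\<in>{1..2 * g}. p = {i, mate i}" by (intro bexI[of _ "2 * k - 1"]) auto
next
  assume "\<exists>i\<in>{1..2 * g}. p = {i, mate i}"
  then obtain i where i: "i \<in> {1..2 * g}" "p = {i, mate i}" by blast
  show "p \<in> pairs2 g"
  proof (cases "odd i")
    case True
    hence "p = {2 * ((i + 1) div 2) - 1, 2 * ((i + 1) div 2)}" using i by (simp add: mate_def; presburger)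
    moreover have "1 \<le> (i + 1) div 2 \<and> (i + 1) div 2 \<le> g" using i by auto
    ultimately show ?thesis unfolding pairs2_def by blast
  next
    case False
    hence "p = {2 * (i div 2) - 1, 2 * (i div 2)}" using i by (auto simp: mate_def; presburger)
    moreover have "1 \<le> i div 2 \<and> i div 2 \<le> g" using i False by auto
    ultimately show ?thesis unfolding pairs2_def by blast
  qed
qed

lemma W_iff: "\<pi> \<in> W g \<longleftrightarrow> \<pi> permutes {1..2 * g} \<and> (\<forall>i\<in>{1..2 * g}. \<pi> (mate i) = mate (\<pi> i))"
proof (cases "\<pi> permutes {1..2 * g}")
  case perm: True
  have pair_iff: "\<pi> ` {i, mate i} \<in> pairs2 g \<longleftrightarrow> \<pi> (mate i) = mate (\<pi> i)" if i: "i \<in> {1..2 * g}" for i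
  proof
    have ne: "\<pi> (mate i) \<noteq> \<pi> i" using perm mate_neq[of i] i by (simp add: permutes_inj[THEN inj_eq])
    assume "\<pi> ` {i, mate i} \<in> pairs2 g"
    then obtain j where j: "j \<in> {1..2 * g}" "{\<pi> i, \<pi> (mate i)} = {j, mate j}"
      unfolding pairs2_iff by auto
    hence "\<pi> i = j \<and> \<pi> (mate i) = mate j \<or> \<pi> i = mate j \<and> \<pi> (mate i) = j"
      unfolding doubleton_eq_iff by blast
    thus "\<pi> (mate i) = mate (\<pi> i)" using mate_mate[of j] j(1) by auto
  next
    assume "\<pi> (mate i) = mate (\<pi> i)"
    hence "\<pi> ` {i, mate i} = {\<pi> i, mate (\<pi> i)}" by simp
    moreover have "\<pi> i \<in> {1..2 * g}" using permutes_in_image[OF perm, THEN iffD2, OF i] .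
    ultimately show "\<pi> ` {i, mate i} \<in> pairs2 g" unfolding pairs2_iff[of "\<pi> ` {i, mate i}"] by blast
  qed
  have "(\<forall>p\<in>pairs2 g. \<pi> ` p \<in> pairs2 g) \<longleftrightarrow> (\<forall>i\<in>{1..2 * g}. \<pi> (mate i) = mate (\<pi> i))"
  proof
    assume "\<forall>p\<in>pairs2 g. \<pi> ` p \<in> pairs2 g"
    thus "\<forall>i\<in>{1..2 * g}. \<pi> (mate i) = mate (\<pi> i)" using pair_iff pairs2_iff[of "{_, mate _}"] by blast
  next
    assume "\<forall>i\<in>{1..2 * g}. \<pi> (mate i) = mate (\<pi> i)"
    thus "\<forall>p\<in>pairs2 g. \<pi> ` p \<in> pairs2 g" using pair_iff pairs2_iff[of _ g] by metis
  qed
  thus ?thesis using perm by (simp add: W_def)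
qed (simp add: W_def)

lemma mate_enumeration_exists:
  assumes "finite S" "card S = 2 * g"
    and "\<forall>x\<in>S. \<iota> x \<in> S \<and> \<iota> (\<iota> x) = x \<and> \<iota> x \<noteq> x"
  shows "\<exists>e. bij_betw e {1..2 * g} S \<and> (\<forall>i\<in>{1..2 * g}. e (mate i) = \<iota> (e i))"
  using assms
proof (induction g arbitrary: S)
  case 0 thus ?case by (simp add: bij_betw_def)
next
  case (Suc g)
  obtain z where z: "z \<in> S" using Suc.prems(2) by fastforce
  define S' where "S' = S - {z, \<iota> z}"
  have z': "\<iota> z \<in> S" "\<iota> (\<iota> z) = z" "\<iota> z \<noteq> z" using Suc.prems(3) z by auto
  have "card S' = 2 * g" using Suc.prems(1,2) z z' by (simp add: S'_def card_Diff_subset)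
  moreover have "\<forall>x\<in>S'. \<iota> x \<in> S' \<and> \<iota> (\<iota> x) = x \<and> \<iota> x \<noteq> x"
  proof
    fix x assume "x \<in> S'"
    hence x: "x \<in> S" "x \<noteq> z" "x \<noteq> \<iota> z" by (auto simp: S'_def)
    moreover have "\<iota> x \<in> S" "\<iota> (\<iota> x) = x" "\<iota> x \<noteq> x" using Suc.prems(3) x(1) by auto
    moreover have "\<iota> x \<noteq> z" "\<iota> x \<noteq> \<iota> z" using x(2,3) z'(2) \<open>\<iota> (\<iota> x) = x\<close> by metis+
    ultimately show "\<iota> x \<in> S' \<and> \<iota> (\<iota> x) = x \<and> \<iota> x \<noteq> x" by (simp add: S'_def)
  qed
  ultimately obtain e' where e': "bij_betw e' {1..2 * g} S'" "\<forall>i\<in>{1..2 * g}. e' (mate i) = \<iota> (e' i)"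
    using Suc.IH[of S'] Suc.prems(1) S'_def by auto
  define e where "e i = (if i = 2 * g + 1 then z else if i = 2 * g + 2 then \<iota> z else e' i)" for i
  have "bij_betw e {1..2 * g} S' = bij_betw e' {1..2 * g} S'" by (rule bij_betw_cong) (simp add: e_def)
  hence "bij_betw e {1..2 * g} S'" using e'(1) by simp
  moreover have "bij_betw e {2 * g + 1, 2 * g + 2} {z, \<iota> z}" using z' by (auto simp: e_def bij_betw_def)
  moreover have "S' \<inter> {z, \<iota> z} = {}" by (auto simp: S'_def)
  ultimately have "bij_betw e ({1..2 * g} \<union> {2 * g + 1, 2 * g + 2}) (S' \<union> {z, \<iota> z})"
    by (rule bij_betw_combine)
  moreover have "{1..2 * g} \<union> {2 * g + 1, 2 * g + 2} = {1..2 * Suc g}" by auto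
  moreover have "S' \<union> {z, \<iota> z} = S" using z z' by (auto simp: S'_def)
  moreover have "e (mate i) = \<iota> (e i)" if i: "i \<in> {1..2 * Suc g}" for i
  proof -
    consider "i \<in> {1..2 * g}" | "i = 2 * g + 1" | "i = 2 * g + 2" using i by force
    thus ?thesis
    proof cases
      case 1 thus ?thesis using e'(2) mate_in[OF 1] by (auto simp: e_def)
    qed (simp_all add: e_def mate_def z')
  qed
  ultimately show ?case by metis
qed

locale mate_enumeration =
  fixes e :: "nat \<Rightarrow> 'a" and S :: "'a set" and \<iota> :: "'a \<Rightarrow> 'a" and g :: nat
  assumes bij: "bij_betw e {1..2 * g} S"
    and mate: "\<And>i. i \<in> {1..2 * g} \<Longrightarrow> e (mate i) = \<iota> (e i)"
begin

definition pull :: "('a \<Rightarrow> 'a) \<Rightarrow> nat \<Rightarrow> nat" where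
  "pull \<sigma> i = (if i \<in> {1..2 * g} then inv_into {1..2 * g} e (\<sigma> (e i)) else i)"

definition compatible :: "('a \<Rightarrow> 'a) \<Rightarrow> bool" where
  "compatible \<sigma> \<longleftrightarrow> bij_betw \<sigma> S S \<and> (\<forall>z\<in>S. \<sigma> (\<iota> z) = \<iota> (\<sigma> z))"

lemma e_in: "i \<in> {1..2 * g} \<Longrightarrow> e i \<in> S"
  using bij bij_betwE by blast

lemma inv_e: "z \<in> S \<Longrightarrow> inv_into {1..2 * g} e z \<in> {1..2 * g} \<and> e (inv_into {1..2 * g} e z) = z"
  using bij by (metis bij_betw_def inv_into_into f_inv_into_f)

lemma inv_e_e: "i \<in> {1..2 * g} \<Longrightarrow> inv_into {1..2 * g} e (e i) = i"
  using bij by (simp add: bij_betw_def inv_into_f_f)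

lemma pull_apply:
  assumes "\<forall>z\<in>S. \<sigma> z \<in> S" "i \<in> {1..2 * g}"
  shows "pull \<sigma> i \<in> {1..2 * g}" "e (pull \<sigma> i) = \<sigma> (e i)"
  using assms inv_e e_in by (simp_all add: pull_def)

lemma pull_in_W:
  assumes \<sigma>: "compatible \<sigma>"
  shows "pull \<sigma> \<in> W g"
proof -
  have into: "\<forall>z\<in>S. \<sigma> z \<in> S" using \<sigma> bij_betwE by (auto simp: compatible_def)
  have "bij_betw (pull \<sigma>) {1..2 * g} {1..2 * g}"
  proof -
    have "bij_betw (inv_into {1..2 * g} e \<circ> \<sigma> \<circ> e) {1..2 * g} {1..2 * g}"
      using bij \<sigma> bij_betw_inv_into[OF bij] unfolding compatible_def by (blast intro: bij_betw_trans)
    thus ?thesis by (rule bij_betw_cong[THEN iffD1, rotated]) (simp add: pull_def)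
  qed
  hence perm: "pull \<sigma> permutes {1..2 * g}" by (rule bij_imp_permutes) (auto simp: pull_def)
  have "pull \<sigma> (mate i) = mate (pull \<sigma> i)" if i: "i \<in> {1..2 * g}" for i
  proof -
    have "e (pull \<sigma> (mate i)) = \<sigma> (\<iota> (e i))" using pull_apply[OF into mate_in[OF i]] mate[OF i] by simp
    also have "\<dots> = e (mate (pull \<sigma> i))"
      using \<sigma> e_in[OF i] pull_apply[OF into i] mate by (simp add: compatible_def)
    finally show ?thesis
      using bij pull_apply(1)[OF into mate_in[OF i]] mate_in[OF pull_apply(1)[OF into i]]
      by (auto simp: bij_betw_def dest: inj_onD)
  qed
  thus ?thesis using perm W_iff by blast
qed

lemma pull_comp:
  assumes \<tau>: "\<forall>z\<in>S. \<tau> z \<in> S"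
  shows "pull (\<sigma> \<circ> \<tau>) = pull \<sigma> \<circ> pull \<tau>"
proof
  fix i show "pull (\<sigma> \<circ> \<tau>) i = (pull \<sigma> \<circ> pull \<tau>) i"
  proof (cases "i \<in> {1..2 * g}")
    case True
    thus ?thesis using pull_apply[OF \<tau> True] by (simp add: pull_def)
  qed (simp add: pull_def del: atLeastAtMost_iff)
qed

lemma pull_eq_iff:
  assumes "\<forall>z\<in>S. \<sigma> z \<in> S" "\<forall>z\<in>S. \<tau> z \<in> S"
  shows "pull \<sigma> = pull \<tau> \<longleftrightarrow> (\<forall>z\<in>S. \<sigma> z = \<tau> z)"
proof
  assume eq: "pull \<sigma> = pull \<tau>"
  show "\<forall>z\<in>S. \<sigma> z = \<tau> z"
  proof
    fix z assume "z \<in> S"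
    then obtain i where "i \<in> {1..2 * g}" "z = e i" using inv_e by metis
    thus "\<sigma> z = \<tau> z" using pull_apply(2)[OF assms(1)] pull_apply(2)[OF assms(2)] eq by metis
  qed
qed (auto simp: fun_eq_iff pull_def e_in)

lemma W_pull_surj:
  assumes \<pi>: "\<pi> \<in> W g"
  shows "\<exists>\<sigma>. compatible \<sigma> \<and> pull \<sigma> = \<pi>"
proof -
  have perm: "\<pi> permutes {1..2 * g}" and \<pi>_mate: "\<forall>i\<in>{1..2 * g}. \<pi> (mate i) = mate (\<pi> i)"
    using \<pi> W_iff by auto
  have \<pi>_in: "\<pi> i \<in> {1..2 * g}" if "i \<in> {1..2 * g}" for i
    using permutes_in_image[OF perm, THEN iffD2, OF that] .
  define \<sigma> where "\<sigma> = (\<lambda>z. e (\<pi> (inv_into {1..2 * g} e z)))"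
  have "bij_betw \<sigma> S S"
    using bij_betw_trans[OF bij_betw_trans[OF bij_betw_inv_into[OF bij] permutes_imp_bij[OF perm]] bij]
    by (simp add: \<sigma>_def comp_def)
  moreover have "\<sigma> (\<iota> z) = \<iota> (\<sigma> z)" if z: "z \<in> S" for z
  proof -
    obtain i where i: "i \<in> {1..2 * g}" "z = e i" using inv_e z by metis
    hence "\<iota> z = e (mate i)" using mate[OF i(1)] by simp
    hence "\<sigma> (\<iota> z) = e (\<pi> (mate i))" using inv_e_e[OF mate_in[OF i(1)]] by (simp add: \<sigma>_def)
    also have "\<dots> = e (mate (\<pi> i))" using \<pi>_mate i(1) by simp
    also have "\<dots> = \<iota> (\<sigma> z)" using mate[OF \<pi>_in[OF i(1)]] i inv_e_e[OF i(1)] by (simp add: \<sigma>_def)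
    finally show ?thesis .
  qed
  moreover have "pull \<sigma> = \<pi>"
    using \<pi>_in inv_e_e e_in permutes_not_in[OF perm] by (auto simp: fun_eq_iff pull_def \<sigma>_def)
  ultimately show ?thesis unfolding compatible_def by blast
qed

lemma group_iso_fun_W:
  assumes compatible: "\<And>\<sigma>. \<sigma> \<in> G \<Longrightarrow> compatible \<sigma>"
    and faithful: "\<And>\<sigma> \<tau>. \<sigma> \<in> G \<Longrightarrow> \<tau> \<in> G \<Longrightarrow> \<forall>z\<in>S. \<sigma> z = \<tau> z \<Longrightarrow> \<sigma> = \<tau>"
    and full: "\<And>\<pi>. compatible \<pi> \<Longrightarrow> \<exists>\<sigma>\<in>G. \<forall>z\<in>S. \<sigma> z = \<pi> z"
  shows "group_iso_fun G (W g)"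
proof -
  have into: "\<forall>z\<in>S. \<sigma> z \<in> S" if "compatible \<sigma>" for \<sigma>
    using that bij_betwE by (auto simp: compatible_def)
  have "inj_on pull G"
  proof (rule inj_onI)
    fix \<sigma> \<tau> assume \<sigma>: "\<sigma> \<in> G" and \<tau>: "\<tau> \<in> G" and "pull \<sigma> = pull \<tau>"
    thus "\<sigma> = \<tau>"
      using faithful pull_eq_iff[OF into[OF compatible[OF \<sigma>]] into[OF compatible[OF \<tau>]]] by blast
  qed
  moreover have "pull ` G = W g"
  proof
    show "pull ` G \<subseteq> W g" using pull_in_W compatible by blast
    show "W g \<subseteq> pull ` G"
    proof
      fix \<pi> assume "\<pi> \<in> W g"
      then obtain \<sigma>' where \<sigma>': "compatible \<sigma>'" "pull \<sigma>' = \<pi>" using W_pull_surj by blast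
      then obtain \<sigma> where \<sigma>: "\<sigma> \<in> G" "\<forall>z\<in>S. \<sigma> z = \<sigma>' z" using full by blast
      hence "pull \<sigma> = \<pi>"
        using pull_eq_iff[OF into[OF compatible[OF \<sigma>(1)]] into[OF \<sigma>'(1)]] \<sigma>'(2) by blast
      thus "\<pi> \<in> pull ` G" using \<sigma>(1) by blast
    qed
  qed
  moreover have "pull (\<sigma> \<circ> \<tau>) = pull \<sigma> \<circ> pull \<tau>" if "\<sigma> \<in> G" "\<tau> \<in> G" for \<sigma> \<tau>
    using pull_comp into compatible that by blast
  ultimately show ?thesis unfolding group_iso_fun_def bij_betw_def by blast
qed

end

section \<open>The Galois group of \<open>P\<close>\<close>

locale weil_galois = weil_polynomials +
  assumes g_pos: "g \<ge> 1"
    and P_cycle: "has_cycle_type P {#2 * g#}"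
    and P_transposition: "has_cycle_type P (add_mset 2 (replicate_mset (2 * g - 2) 1))"
    and Q_cycle_types: "\<forall>lam. is_partition g lam \<longrightarrow> has_cycle_type Q lam"
begin

lemma Q_cycle_type: "is_partition g lam \<Longrightarrow> \<exists>\<tau>\<in>gal Q. cycle_type_on \<tau> (croots Q) = lam"
  using Q_cycle_types by (auto simp: has_cycle_type_def)

lemma gal_P_full_cycle: "\<exists>\<sigma>\<in>gal P. transitive_on \<sigma> (croots P)"
  and card_croots_P: "card (croots P) = 2 * g"
proof -
  obtain \<sigma> where \<sigma>: "\<sigma> \<in> gal P" "cycle_type_on \<sigma> (croots P) = {#2 * g#}"
    using P_cycle by (auto simp: has_cycle_type_def)
  thus "\<exists>\<sigma>\<in>gal P. transitive_on \<sigma> (croots P)" "card (croots P) = 2 * g"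
    using permutation_on.cycle_type_single[OF GP.permutation_on[OF \<sigma>(1)] \<sigma>(2)] by blast+
qed

lemma card_croots_Q: "card (croots Q) = g"
proof -
  obtain \<tau> where "\<tau> \<in> gal Q" "cycle_type_on \<tau> (croots Q) = {#g#}"
    using Q_cycle_type[of "{#g#}"] g_pos by (auto simp: is_partition_def)
  thus ?thesis using permutation_on.cycle_type_single(1)[OF GQ.permutation_on] by blast
qed

lemma card_tr_fibre: "card {z\<in>croots P. tr z = t} \<le> 2"
proof (cases "\<exists>z\<in>croots P. tr z = t")
  case True
  then obtain z where z: "z \<in> croots P" "tr z = t" by blast
  have "{y\<in>croots P. tr y = t} \<subseteq> {z, cq / z}"
  proof
    fix y assume "y \<in> {y\<in>croots P. tr y = t}"
    thus "y \<in> {z, cq / z}" using tr_eq_imp_dual[OF z(1), of y] z(2) by auto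
  qed
  hence "card {y\<in>croots P. tr y = t} \<le> card {z, cq / z}" by (rule card_mono[rotated]) simp
  also have "\<dots> \<le> 2" by (simp add: card_insert_if)
  finally show ?thesis .
next
  case False
  hence "{z\<in>croots P. tr z = t} = {}" by blast
  thus ?thesis by (simp only: card.empty zero_le)
qed

text \<open>A root equal to its dual would be the only root over its image in \<open>croots Q\<close>; as each
  of the \<open>g\<close> fibres of \<open>tr\<close> has at most two points, \<open>P\<close> would have fewer than \<open>2g\<close> roots.\<close>

lemma dual_neq: "z \<in> croots P \<Longrightarrow> cq / z \<noteq> z"
proof
  assume z: "z \<in> croots P" and fixed: "cq / z = z"
  define t0 where "t0 = tr z"
  have t0: "t0 \<in> croots Q" using z croots_P_iff t0_def by simp
  have "{y\<in>croots P. tr y = t0} \<subseteq> {z}" using tr_eq_imp_dual[OF z] fixed t0_def by auto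
  hence "card {y\<in>croots P. tr y = t0} \<le> card {z}" by (rule card_mono[rotated]) simp
  hence fibre_t0: "card {y\<in>croots P. tr y = t0} \<le> 1" by simp
  have rest: "(\<Sum>t\<in>croots Q - {t0}. card {y\<in>croots P. tr y = t}) \<le> card (croots Q - {t0}) * 2"
    using sum_bounded_above[of "croots Q - {t0}" "\<lambda>t. card {y\<in>croots P. tr y = t}" 2] card_tr_fibre
    by simp
  have "croots P = (\<Union>t\<in>croots Q. {y\<in>croots P. tr y = t})" using croots_P_iff by blast
  hence "card (croots P) \<le> (\<Sum>t\<in>croots Q. card {y\<in>croots P. tr y = t})"
    using card_UN_le[OF finite_croots[OF Q_nz], of "\<lambda>t. {y\<in>croots P. tr y = t}"] by simp
  also have "\<dots> = card {y\<in>croots P. tr y = t0} + (\<Sum>t\<in>croots Q - {t0}. card {y\<in>croots P. tr y = t})"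
    by (rule sum.remove[OF finite_croots[OF Q_nz] t0])
  also have "\<dots> \<le> 1 + card (croots Q - {t0}) * 2" using fibre_t0 rest by linarith
  also have "\<dots> = 1 + (g - 1) * 2" using card_croots_Q t0 finite_croots[OF Q_nz] by simp
  finally show False using card_croots_P g_pos by simp
qed

lemma gal_Q_transpositions: "a \<in> croots Q \<Longrightarrow> b \<in> croots Q \<Longrightarrow> GQ.realized (Transposition.transpose a b)"
proof (cases "a = b")
  case False
  assume a: "a \<in> croots Q" and b: "b \<in> croots Q"
  have "card {a, b} \<le> card (croots Q)"
    by (rule card_mono) (use a b finite_croots[OF Q_nz] in auto)
  hence "g \<ge> 2" using False card_croots_Q by simp
  hence "is_partition g (add_mset 2 (replicate_mset (g - 2) 1))"
    by (auto simp: is_partition_def in_replicate_mset)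
  then obtain t where t: "t \<in> gal Q" "cycle_type_on t (croots Q) = add_mset 2 (replicate_mset (g - 2) 1)"
    using Q_cycle_type by blast
  obtain c where c: "c \<in> gal Q" "cycle_type_on c (croots Q) = {#g#}"
    using Q_cycle_type[of "{#g#}"] g_pos by (auto simp: is_partition_def)
  obtain d where d: "d \<in> gal Q" "cycle_type_on d (croots Q) = {#g - 1, 1#}"
    using Q_cycle_type[of "{#g - 1, 1#}"] \<open>g \<ge> 2\<close> by (auto simp: is_partition_def)
  obtain a0 b0 where ab0: "a0 \<in> croots Q" "b0 \<in> croots Q" "a0 \<noteq> b0"
      "\<forall>x\<in>croots Q. t x = Transposition.transpose a0 b0 x"
    using permutation_on.cycle_type_transposition[OF GQ.permutation_on[OF t(1)] t(2)] by blast
  obtain p where p: "p \<in> croots Q" "d p = p" "transitive_on d (croots Q - {p})"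
    using permutation_on.cycle_type_fixpoint[OF GQ.permutation_on[OF d(1)] d(2)] by blast
  show ?thesis
    using GQ.all_transpositions_realized[OF ab0(1-3) GQ.realizedI[OF t(1)] c(1)
        permutation_on.cycle_type_single(2)[OF GQ.permutation_on[OF c(1)] c(2)] d(1) p a b]
      ab0(4) by blast
qed (simp add: GQ.realized_id)

lemma lift_permutation:
  assumes "\<rho> permutes croots Q"
  shows "\<exists>\<sigma>\<in>gal P. \<forall>z\<in>croots P. tr (\<sigma> z) = \<rho> (tr z)"
proof -
  obtain \<tau> where \<tau>: "\<tau> \<in> gal Q" "\<forall>t\<in>croots Q. \<tau> t = \<rho> t"
    using GQ.realized_if_permutes[OF gal_Q_transpositions assms] by (auto simp: GQ.realized_def)
  obtain \<sigma> where \<sigma>: "\<sigma> \<in> gal P" "\<forall>t\<in>croots Q. \<sigma> t = \<tau> t" using gal_Q_extends[OF \<tau>(1)] by blast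
  have "tr (\<sigma> z) = \<rho> (tr z)" if "z \<in> croots P" for z
    using gal_P_tr[OF \<sigma>(1) that] \<sigma>(2) \<tau>(2) croots_P_iff that by simp
  thus ?thesis using \<sigma>(1) by blast
qed

text \<open>Conjugating the transposition in \<open>Gal(P)\<close> by powers of the \<open>2g\<close>-cycle swaps any root
  with its dual; the transposition itself swaps a dual pair since it commutes with duality.\<close>

lemma gal_P_dual_swap: "r \<in> croots P \<Longrightarrow> GP.realized (Transposition.transpose r (cq / r))"
proof -
  assume r: "r \<in> croots P"
  obtain \<sigma>0 where \<sigma>0: "\<sigma>0 \<in> gal P"
      "cycle_type_on \<sigma>0 (croots P) = add_mset 2 (replicate_mset (2 * g - 2) 1)"
    using P_transposition by (auto simp: has_cycle_type_def)
  obtain a b where ab: "a \<in> croots P" "b \<in> croots P" "a \<noteq> b"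
      "\<forall>x\<in>croots P. \<sigma>0 x = Transposition.transpose a b x"
    using permutation_on.cycle_type_transposition[OF GP.permutation_on[OF \<sigma>0(1)] \<sigma>0(2)] by blast
  have b: "b = cq / a"
  proof (rule ccontr)
    assume ne: "b \<noteq> cq / a"
    have "\<sigma>0 (cq / a) = cq / a" using ab ne dual_neq[OF ab(1)] dual_in_croots_P by simp
    hence "cq / b = cq / a" using gal_P_dual[OF \<sigma>0(1) ab(1)] ab(1,4) by simp
    thus False using ab(3) cq_nz by (simp add: field_simps)
  qed
  obtain \<sigma>1 where \<sigma>1: "\<sigma>1 \<in> gal P" "transitive_on \<sigma>1 (croots P)" using gal_P_full_cycle by blast
  obtain k where k: "(\<sigma>1 ^^ k) a = r" using \<sigma>1(2) ab(1) r by (auto simp: transitive_on_def)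
  have h: "\<sigma>1 ^^ k \<in> gal P" by (rule GP.funpow_in[OF \<sigma>1(1)])
  have "(\<sigma>1 ^^ k) b = cq / r" using gal_P_dual[OF h ab(1)] k b by simp
  thus ?thesis
    using GP.realized_transpose_conj[OF GP.realizedI[OF \<sigma>0(1)] h ab(1,2)] ab(4) k by simp
qed

lemma realized_if_dual_close:
  assumes compat: "\<forall>z\<in>croots P. \<pi> (cq / z) = cq / \<pi> z"
  shows "\<sigma> \<in> gal P \<Longrightarrow> \<forall>z\<in>croots P. \<pi> z = \<sigma> z \<or> \<pi> z = cq / \<sigma> z \<Longrightarrow> GP.realized \<pi>"
proof (induction "card {z\<in>croots P. \<pi> z \<noteq> \<sigma> z}" arbitrary: \<sigma> rule: less_induct)
  case less
  show ?case
  proof (cases "\<exists>z\<in>croots P. \<pi> z \<noteq> \<sigma> z")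
    case False thus ?thesis by (intro GP.realizedI[OF less.prems(1)]) auto
  next
    case True
    then obtain z where z: "z \<in> croots P" "\<pi> z \<noteq> \<sigma> z" by blast
    define a where "a = \<sigma> z"
    have a: "a \<in> croots P" using GP.apply_in[OF less.prems(1) z(1)] a_def by simp
    have \<pi>z: "\<pi> z = cq / a" using less.prems(2) z a_def by auto
    obtain sw where sw: "sw \<in> gal P" "\<forall>y\<in>croots P. sw y = Transposition.transpose a (cq / a) y"
      using gal_P_dual_swap[OF a] by (auto simp: GP.realized_def)
    define \<sigma>' where "\<sigma>' = sw \<circ> \<sigma>"
    have \<sigma>': "\<sigma>' \<in> gal P" unfolding \<sigma>'_def by (rule gal_comp[OF sw(1) less.prems(1)])
    have \<sigma>_dual: "\<sigma> (cq / z) = cq / a" using gal_P_dual[OF less.prems(1) z(1)] a_def by simp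
    have fixed: "\<pi> y = \<sigma>' y" if y: "y \<in> croots P" "\<sigma> y = a \<or> \<sigma> y = cq / a" for y
    proof (cases "\<sigma> y = a")
      case True
      hence "y = z" using GP.apply_inj[OF less.prems(1) y(1) z(1)] a_def by simp
      thus ?thesis using \<pi>z sw(2) a True by (simp add: \<sigma>'_def)
    next
      case False
      hence "\<sigma> y = cq / a" using y by simp
      hence "y = cq / z" using GP.apply_inj[OF less.prems(1) y(1) dual_in_croots_P[OF z(1)]] \<sigma>_dual by simp
      moreover have "\<pi> (cq / z) = a" using compat z(1) \<pi>z dual_dual by simp
      ultimately show ?thesis
        using sw(2) \<open>\<sigma> y = cq / a\<close> dual_in_croots_P[OF a] dual_neq[OF a] by (simp add: \<sigma>'_def)
    qed
    have unchanged: "\<sigma>' y = \<sigma> y" if y: "y \<in> croots P" "\<sigma> y \<noteq> a" "\<sigma> y \<noteq> cq / a" for y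
      using sw(2) GP.apply_in[OF less.prems(1) y(1)] y by (simp add: \<sigma>'_def)
    have close: "\<forall>y\<in>croots P. \<pi> y = \<sigma>' y \<or> \<pi> y = cq / \<sigma>' y"
    proof
      fix y assume y: "y \<in> croots P"
      show "\<pi> y = \<sigma>' y \<or> \<pi> y = cq / \<sigma>' y"
      proof (cases "\<sigma> y = a \<or> \<sigma> y = cq / a")
        case True thus ?thesis using fixed y by blast
      next
        case False thus ?thesis using unchanged[OF y] less.prems(2) y by auto
      qed
    qed
    let ?D = "{y\<in>croots P. \<pi> y \<noteq> \<sigma> y}"
    have "{y\<in>croots P. \<pi> y \<noteq> \<sigma>' y} \<subseteq> ?D - {z}"
    proof
      fix y assume y: "y \<in> {y\<in>croots P. \<pi> y \<noteq> \<sigma>' y}"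
      hence "\<not> (\<sigma> y = a \<or> \<sigma> y = cq / a)" using fixed by blast
      thus "y \<in> ?D - {z}" using y unchanged a_def by auto
    qed
    hence "card {y\<in>croots P. \<pi> y \<noteq> \<sigma>' y} \<le> card (?D - {z})"
      by (rule card_mono[rotated]) (simp add: finite_croots[OF P_nz])
    also have "\<dots> < card ?D" by (rule card_Diff1_less) (use z finite_croots[OF P_nz] in auto)
    finally have "card {y\<in>croots P. \<pi> y \<noteq> \<sigma>' y} < card ?D" .
    thus ?thesis using less.hyps \<sigma>' close by blast
  qed
qed

lemma induced_permutation:
  assumes \<pi>: "bij_betw \<pi> (croots P) (croots P)" and compat: "\<forall>z\<in>croots P. \<pi> (cq / z) = cq / \<pi> z"
  shows "\<exists>\<rho>. \<rho> permutes croots Q \<and> (\<forall>z\<in>croots P. \<rho> (tr z) = tr (\<pi> z))"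
proof -
  define rep where "rep t = (SOME z. z \<in> croots P \<and> tr z = t)" for t
  have rep: "rep t \<in> croots P" "tr (rep t) = t" if "t \<in> croots Q" for t
    using someI_ex[OF croots_Q_tr[OF that, unfolded Bex_def]] by (simp_all add: rep_def)
  define \<rho> where "\<rho> t = (if t \<in> croots Q then tr (\<pi> (rep t)) else t)" for t
  have \<pi>_in: "\<pi> z \<in> croots P" if "z \<in> croots P" for z using \<pi> that bij_betwE by blast
  have \<rho>_tr: "\<rho> (tr z) = tr (\<pi> z)" if z: "z \<in> croots P" for z
  proof -
    have t: "tr z \<in> croots Q" using croots_P_iff z by blast
    have "rep (tr z) = z \<or> rep (tr z) = cq / z" using tr_eq_imp_dual[OF z] rep[OF t] by blast
    moreover have "tr (\<pi> (cq / z)) = tr (\<pi> z)" using compat z tr_dual by simp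
    ultimately show ?thesis using t by (auto simp: \<rho>_def)
  qed
  have "inj_on \<rho> (croots Q)"
  proof (rule inj_onI)
    fix t1 t2 assume t1: "t1 \<in> croots Q" and t2: "t2 \<in> croots Q" and eq: "\<rho> t1 = \<rho> t2"
    obtain z1 where z1: "z1 \<in> croots P" "tr z1 = t1" using croots_Q_tr t1 by blast
    obtain z2 where z2: "z2 \<in> croots P" "tr z2 = t2" using croots_Q_tr t2 by blast
    note z = z1 z2
    have "tr (\<pi> z2) = tr (\<pi> z1)" using eq \<rho>_tr[OF z1(1)] \<rho>_tr[OF z2(1)] z by simp
    hence "\<pi> z2 = \<pi> z1 \<or> \<pi> z2 = cq / \<pi> z1" using tr_eq_imp_dual \<pi>_in z by blast
    hence "\<pi> z2 = \<pi> z1 \<or> \<pi> z2 = \<pi> (cq / z1)" using compat z1(1) by simp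
    hence "z2 = z1 \<or> z2 = cq / z1"
      using \<pi> z(1,3) dual_in_croots_P[OF z(1)] by (auto simp: bij_betw_def dest: inj_onD)
    thus "t1 = t2" using z tr_dual by auto
  qed
  moreover have "\<rho> ` croots Q \<subseteq> croots Q"
    using rep \<rho>_tr \<pi>_in croots_P_iff by (auto simp: \<rho>_def)
  ultimately have "bij_betw \<rho> (croots Q) (croots Q)"
    using endo_inj_surj[OF finite_croots[OF Q_nz]] by (simp add: bij_betw_def)
  hence "\<rho> permutes croots Q" by (rule bij_imp_permutes) (simp add: \<rho>_def)
  thus ?thesis using \<rho>_tr by blast
qed

lemma realized_if_dual_compatible:
  assumes \<pi>: "bij_betw \<pi> (croots P) (croots P)" and compat: "\<forall>z\<in>croots P. \<pi> (cq / z) = cq / \<pi> z"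
  shows "GP.realized \<pi>"
proof -
  obtain \<rho> where \<rho>: "\<rho> permutes croots Q" "\<forall>z\<in>croots P. \<rho> (tr z) = tr (\<pi> z)"
    using induced_permutation[OF assms] by blast
  obtain \<sigma> where \<sigma>: "\<sigma> \<in> gal P" "\<forall>z\<in>croots P. tr (\<sigma> z) = \<rho> (tr z)"
    using lift_permutation[OF \<rho>(1)] by blast
  have "\<pi> z = \<sigma> z \<or> \<pi> z = cq / \<sigma> z" if z: "z \<in> croots P" for z
  proof -
    have "tr (\<pi> z) = tr (\<sigma> z)" using \<rho>(2) \<sigma>(2) z by simp
    moreover have "\<pi> z \<in> croots P" using \<pi> z bij_betwE by blast
    ultimately show ?thesis using tr_eq_imp_dual[OF GP.apply_in[OF \<sigma>(1) z]] by blast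
  qed
  thus ?thesis using realized_if_dual_close[OF compat \<sigma>(1)] by blast
qed

lemma gal_P_iso_W: "group_iso_fun (gal P) (W g)"
proof -
  have "\<forall>x\<in>croots P. cq / x \<in> croots P \<and> cq / (cq / x) = x \<and> cq / x \<noteq> x"
    using dual_in_croots_P dual_dual dual_neq by blast
  then obtain e where "bij_betw e {1..2 * g} (croots P)" "\<forall>i\<in>{1..2 * g}. e (mate i) = cq / e i"
    using mate_enumeration_exists[OF finite_croots[OF P_nz] card_croots_P] by blast
  then interpret mate_enumeration e "croots P" "\<lambda>z. cq / z" g by unfold_locales auto
  show ?thesis
  proof (rule group_iso_fun_W)
    show "compatible \<sigma>" if "\<sigma> \<in> gal P" for \<sigma>
      using GP.bij[OF that] gal_P_dual[OF that] by (simp add: compatible_def)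
    show "\<sigma> = \<tau>" if "\<sigma> \<in> gal P" "\<tau> \<in> gal P" "\<forall>z\<in>croots P. \<sigma> z = \<tau> z" for \<sigma> \<tau>
      using gal_eqI that by blast
    show "\<exists>\<sigma>\<in>gal P. \<forall>z\<in>croots P. \<sigma> z = \<pi> z" if "compatible \<pi>" for \<pi>
      using realized_if_dual_compatible that by (auto simp: compatible_def GP.realized_def)
  qed
qed

end

theorem lemma6p5:
  fixes P Q :: "int poly" and q g :: nat
  assumes q_pp: "\<exists>p k. prime p \<and> k \<ge> 1 \<and> q = p ^ k"
    and g1: "g \<ge> 1"
    and monic: "lead_coeff P = 1" and degP: "degree P = 2 * g"
    and weil: "\<forall>z\<in>croots P. cmod z = sqrt (real q)"
    and PQ: "\<forall>x::complex. x \<noteq> 0 \<longrightarrow>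
               poly (map_poly of_int P) x = x ^ g * poly (map_poly of_int Q) (x + of_nat q / x)"
    and ct1: "has_cycle_type P {#2 * g#}"
    and ct2: "has_cycle_type P (add_mset 2 (replicate_mset (2 * g - 2) 1))"
    and ctQ: "\<forall>lam. is_partition g lam \<longrightarrow> has_cycle_type Q lam"
  shows "group_iso_fun (gal P) (W g)"
proof -
  have q_pos: "q > 0" using q_pp prime_gt_0_nat by auto
  have "has_cycle_type Q {#g#}" using ctQ g1 by (simp add: is_partition_def)
  hence "Q \<noteq> 0" by (simp add: has_cycle_type_def separable_int_def)
  moreover have "0 \<notin> croots P" using weil q_pos by force
  moreover have "P \<noteq> 0" using monic by auto
  ultimately interpret weil_galois P Q q g
    using q_pos PQ g1 ct1 ct2 ctQ by unfold_locales auto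
  show ?thesis by (rule gal_P_iso_W)
qed

end
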